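(* Let $(X,\mu)$ be an irreducible, non-oriented $\mathcal F$-BRW. Then $(X,\mu)$ is nonamenable if and only if $M_s<M_w$.
   Context: $S_X:=\{f:X\to\mathbb N:\sum_yf(y)<\infty\}$, $X$ finite or countable. A discrete-time BRW $(X,\mu)$: probability measures $\mu_x$ on $S_X$; each particle at $x$ is independently replaced by $f(y)$ particles at each $y$, $f\sim\mu_x$. First moments $m_{xy}:=\sum_ff(y)\mu_x(f)$ with $\sup_x\sum_ym_{xy}<\infty$, $m^{(n)}_{xy}$ the entries of $M^n$. Irreducible: every $y$ reachable from every $x$ via a path with $m_{x_ix_{i+1}}>0$. Non-oriented: $m_{xy}=m_{yx}$ for all $x,y$. $M_s(x,y):=\limsup_n(m^{(n)}_{xy})^{1/n}$, $M_w(x):=\liminf_n(\sum_ym^{(n)}_{xy})^{1/n}$; for irreducible BRWs these do not depend on $x,y$ and are denoted $M_s$, $M_w$. Nonamenable means $\inf\{|S|^{-1}\sum_{x\in S,y\notin S}m_{xy}: S\subseteq X \text{ finite nonempty}\}>0$. Locally isomorphic: surjection $g:X\to Y$ with $\nu_{g(x)}(\cdot)=\mu_x(\pi_g^{-1}(\cdot))$, $\pi_g(f)(y)=\sum_{w\in g^{-1}(y)}f(w)$; $\mathcal F$-BRW: locally isomorphic to a BRW on a finite set $Y$. *)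

theory Defs
  imports "HOL-Probability.Probability"
begin

definition fin_conf :: "('x \<Rightarrow> nat) set" where
  "fin_conf = {f. finite {y. f y \<noteq> 0}}"

definition first_moment :: "('x \<Rightarrow> ('x \<Rightarrow> nat) pmf) \<Rightarrow> 'x \<Rightarrow> 'x \<Rightarrow> ennreal" where
  "first_moment \<mu> x y = (\<integral>\<^sup>+ f. ennreal (real (f y)) \<partial>measure_pmf (\<mu> x))"

definition is_brw :: "('x \<Rightarrow> ('x \<Rightarrow> nat) pmf) \<Rightarrow> bool" where
  "is_brw \<mu> \<longleftrightarrow> (\<forall>x. set_pmf (\<mu> x) \<subseteq> fin_conf) \<and>
     (\<exists>C::real. \<forall>x. (\<integral>\<^sup>+ y. first_moment \<mu> x y \<partial>count_space UNIV) \<le> ennreal C)"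

primrec moment_pow :: "('x \<Rightarrow> ('x \<Rightarrow> nat) pmf) \<Rightarrow> nat \<Rightarrow> 'x \<Rightarrow> 'x \<Rightarrow> ennreal" where
  "moment_pow \<mu> 0 x y = (if x = y then 1 else 0)"
| "moment_pow \<mu> (Suc n) x y =
     (\<integral>\<^sup>+ z. first_moment \<mu> x z * moment_pow \<mu> n z y \<partial>count_space UNIV)"

definition M_s :: "('x \<Rightarrow> ('x \<Rightarrow> nat) pmf) \<Rightarrow> 'x \<Rightarrow> 'x \<Rightarrow> ereal" where
  "M_s \<mu> x y = limsup (\<lambda>n. ereal (root n (enn2real (moment_pow \<mu> n x y))))"

definition M_w :: "('x \<Rightarrow> ('x \<Rightarrow> nat) pmf) \<Rightarrow> 'x \<Rightarrow> ereal" where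
  "M_w \<mu> x = liminf (\<lambda>n. ereal (root n (enn2real
                 (\<integral>\<^sup>+ y. moment_pow \<mu> n x y \<partial>count_space UNIV))))"

definition irreducible_brw :: "('x \<Rightarrow> ('x \<Rightarrow> nat) pmf) \<Rightarrow> bool" where
  "irreducible_brw \<mu> \<longleftrightarrow> (\<forall>x y. (x, y) \<in> {(a, b). 0 < first_moment \<mu> a b}\<^sup>*)"

definition non_oriented :: "('x \<Rightarrow> ('x \<Rightarrow> nat) pmf) \<Rightarrow> bool" where
  "non_oriented \<mu> \<longleftrightarrow> (\<forall>x y. first_moment \<mu> x y = first_moment \<mu> y x)"

definition nonamenable :: "('x \<Rightarrow> ('x \<Rightarrow> nat) pmf) \<Rightarrow> bool" where
  "nonamenable \<mu> \<longleftrightarrow>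
     0 < (INF S\<in>{S. finite S \<and> S \<noteq> {}}.
            (\<Sum>x\<in>S. \<integral>\<^sup>+ y. indicator (- S) y * first_moment \<mu> x y \<partial>count_space UNIV)
              / of_nat (card S))"

definition proj_conf :: "('x \<Rightarrow> 'y) \<Rightarrow> ('x \<Rightarrow> nat) \<Rightarrow> 'y \<Rightarrow> nat" where
  "proj_conf g f = (\<lambda>y. \<Sum>w\<in>{w. g w = y \<and> f w \<noteq> 0}. f w)"

definition locally_isomorphic ::
  "('x \<Rightarrow> ('x \<Rightarrow> nat) pmf) \<Rightarrow> ('x \<Rightarrow> 'y) \<Rightarrow> ('y \<Rightarrow> ('y \<Rightarrow> nat) pmf) \<Rightarrow> bool" where
  "locally_isomorphic \<mu> g \<nu> \<longleftrightarrow> surj g \<and> (\<forall>x. \<nu> (g x) = map_pmf (proj_conf g) (\<mu> x))"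

end

theory Submission
  imports Defs
begin

(*
  Write m x y for the first moments of mu.  The projection g turns them into a finite
  irreducible nonnegative matrix n on Y; its Perron-Frobenius eigenvector w (obtained from
  Brouwer's fixed point theorem) lifts to a positive, bounded and bounded-away-from-zero
  weight W = w o g on X with  sum_y m x y W y = rho W x.  Hence row sums of M^k are
  comparable to rho^k, so M_w = rho, and the theorem reduces to:  nonamenable <-> M_s < rho.

  (=>) An isoperimetric constant kappa > 0 transfers to the W-weighted matrix; a discrete
       Cheeger inequality bounds the quadratic form of m on every finite set by theta < rho;
       for a symmetric matrix this bounds the operator norm of every finite truncation of M,
       hence every entry of M^k by theta^k, and M_s <= theta.
  (<=) Folner sets give finite S on which the quadratic form of m at W is at least r |W|^2
       for any r < rho; powers of the truncation to S then have an entry >= c r^k, and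
       irreducibility transports this to m^(N) x y >= gamma r^N for infinitely many N,
       hence M_s >= r.
*)

section \<open>Finite nonnegative and symmetric matrices\<close>

definition prob_simplex :: "(real^'y::finite) set" where
  "prob_simplex = {v. (\<forall>i. 0 \<le> v$i) \<and> sum (\<lambda>i. v$i) UNIV = 1}"

lemma prob_simplex_compact_convex:
  "compact (prob_simplex :: (real^'y::finite) set)" "convex (prob_simplex :: (real^'y) set)"
  "(prob_simplex :: (real^'y) set) \<noteq> {}"
proof -
  have "closed {v::real^'y. sum (\<lambda>i. v$i) UNIV = 1}"
    by (intro closed_Collect_eq continuous_intros)
  moreover have "closed {v::real^'y. 0 \<le> v$i}" for i
    by (intro closed_Collect_le continuous_intros)
  ultimately have "closed ((\<Inter>i. {v::real^'y. 0 \<le> v$i}) \<inter> {v. sum (\<lambda>i. v$i) UNIV = 1})"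
    by (auto intro!: closed_Int closed_INT)
  moreover have "(prob_simplex :: (real^'y) set) = (\<Inter>i. {v::real^'y. 0 \<le> v$i}) \<inter> {v. sum (\<lambda>i. v$i) UNIV = 1}"
    unfolding prob_simplex_def by auto
  ultimately have "closed (prob_simplex :: (real^'y) set)" by simp
  moreover have "bounded (prob_simplex :: (real^'y) set)"
  proof -
    have "norm v \<le> 1" if "v \<in> prob_simplex" for v :: "real^'y"
    proof -
      have "norm v \<le> sum (\<lambda>i. \<bar>v$i\<bar>) UNIV" by (rule norm_le_l1_cart)
      also have "\<dots> = 1" using that unfolding prob_simplex_def by simp
      finally show ?thesis .
    qed
    then show ?thesis unfolding bounded_iff by blast
  qed
  ultimately show "compact (prob_simplex :: (real^'y) set)" by (simp add: compact_eq_bounded_closed)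
  show "convex (prob_simplex :: (real^'y) set)"
    unfolding convex_def prob_simplex_def
    by (auto simp: sum.distrib sum_distrib_left[symmetric] intro!: add_nonneg_nonneg mult_nonneg_nonneg)
  have "(\<chi> i. 1 / real CARD('y)) \<in> (prob_simplex :: (real^'y) set)" unfolding prob_simplex_def by simp
  then show "(prob_simplex :: (real^'y) set) \<noteq> {}" by blast
qed

(* Brouwer's fixed point theorem applied to v |-> (v + n v)/|v + n v|_1 on the simplex
   gives a nonnegative eigenvector of a nonnegative matrix. *)
lemma nonneg_eigenvector_exists:
  fixes n :: "'y::finite \<Rightarrow> 'y \<Rightarrow> real"
  assumes nonneg: "\<And>i j. n i j \<ge> 0"
  shows "\<exists>\<rho> v. \<rho> \<ge> 0 \<and> (\<forall>i. v i \<ge> 0) \<and> (\<exists>i. v i \<noteq> 0) \<and>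
                (\<forall>i. (\<Sum>j\<in>UNIV. n i j * v j) = \<rho> * v i)"
proof -
  define S where "S = (prob_simplex :: (real^'y) set)"
  define L where "L v = (\<chi> i. v$i + (\<Sum>j\<in>UNIV. n i j * v$j))" for v :: "real^'y"
  define d where "d v = (\<Sum>i\<in>UNIV. L v $ i)" for v
  define T where "T v = (1 / d v) *\<^sub>R L v" for v
  have L_nonneg: "0 \<le> L v $ i" if "v \<in> S" for v i
    using that nonneg unfolding L_def S_def prob_simplex_def by (auto intro!: add_nonneg_nonneg sum_nonneg)
  have d_ge_1: "d v \<ge> 1" if "v \<in> S" for v
  proof -
    have "d v = (\<Sum>i\<in>UNIV. v$i) + (\<Sum>i\<in>UNIV. (\<Sum>j\<in>UNIV. n i j * v$j))"
      unfolding d_def L_def by (simp add: sum.distrib)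
    moreover have "(\<Sum>i\<in>UNIV. (\<Sum>j\<in>UNIV. n i j * v$j)) \<ge> 0"
      using that nonneg unfolding S_def prob_simplex_def by (auto intro!: sum_nonneg)
    ultimately show ?thesis using that unfolding S_def prob_simplex_def by simp
  qed
  have "continuous_on S T"
    unfolding T_def d_def L_def
    apply (intro continuous_intros)
    using d_ge_1 unfolding d_def L_def by fastforce
  moreover have "T \<in> S \<rightarrow> S"
  proof
    fix v assume v: "v \<in> S"
    have "d v > 0" using d_ge_1[OF v] by simp
    then show "T v \<in> S"
      unfolding S_def prob_simplex_def T_def using L_nonneg[OF v]
      by (auto simp: d_def sum_divide_distrib[symmetric])
  qed
  ultimately obtain v where v: "v \<in> S" and fixed: "T v = v"
    using brouwer[of S T] prob_simplex_compact_convex unfolding S_def by blast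
  have d_pos: "d v > 0" using d_ge_1[OF v] by simp
  have "L v = d v *\<^sub>R ((1 / d v) *\<^sub>R L v)" using d_pos by simp
  also have "\<dots> = d v *\<^sub>R v" using fixed unfolding T_def by simp
  finally have "L v = d v *\<^sub>R v" .
  then have "L v $ i = d v * v $ i" for i by simp
  then have "(\<Sum>j\<in>UNIV. n i j * v$j) = (d v - 1) * v$i" for i
    unfolding L_def by (simp add: algebra_simps)
  moreover have "\<exists>i. v$i \<noteq> 0"
  proof (rule ccontr)
    assume "\<not> (\<exists>i. v$i \<noteq> 0)"
    then show False using v unfolding S_def prob_simplex_def by simp
  qed
  moreover have "d v - 1 \<ge> 0" "\<forall>i. v$i \<ge> 0" using d_ge_1[OF v] v unfolding S_def prob_simplex_def by auto
  ultimately show ?thesis by (intro exI[of _ "d v - 1"] exI[of _ "\<lambda>i. v$i"]) simp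
qed

(* For an irreducible nonnegative matrix, a nonzero nonnegative eigenvector has no zero
   entry: zeros propagate along the edges i -> j with n i j > 0. *)
lemma irreducible_eigenvector_positive:
  fixes n :: "'y::finite \<Rightarrow> 'y \<Rightarrow> real"
  assumes nonneg: "\<And>i j. n i j \<ge> 0"
    and irr: "\<And>i j. (i,j) \<in> {(a,b). n a b > 0}\<^sup>*"
    and v_nonneg: "\<And>i. v i \<ge> 0" and v_nonzero: "\<exists>i. v i \<noteq> 0"
    and eigen: "\<And>i. (\<Sum>j\<in>UNIV. n i j * v j) = \<rho> * v i"
  shows "v i > 0"
proof (rule ccontr)
  have zero_propagates: "v b = 0" if "(a,b) \<in> {(a,b). n a b > 0}\<^sup>*" "v a = 0" for a b
    using that
  proof (induction rule: rtrancl_induct)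
    case (step b c)
    then have "(\<Sum>j\<in>UNIV. n b j * v j) = 0" using eigen[of b] by simp
    then have "n b c * v c = 0"
      using sum_nonneg_eq_0_iff[of UNIV "\<lambda>j. n b j * v j"] nonneg v_nonneg by simp
    then show ?case using step(2) by simp
  qed
  assume "\<not> v i > 0"
  then have "v i = 0" using v_nonneg[of i] by simp
  obtain j where "v j \<noteq> 0" using v_nonzero by blast
  moreover have "v j = 0" by (rule zero_propagates[OF irr \<open>v i = 0\<close>])
  ultimately show False by simp
qed

lemma perron_frobenius_positive_eigenvector:
  fixes n :: "'y::finite \<Rightarrow> 'y \<Rightarrow> real"
  assumes nonneg: "\<And>i j. n i j \<ge> 0"
    and irr: "\<And>i j. (i,j) \<in> {(a,b). n a b > 0}\<^sup>*"
  obtains \<rho> w where "\<rho> \<ge> 0" "\<And>i. w i > 0" "\<And>i. (\<Sum>j\<in>UNIV. n i j * w j) = \<rho> * w i"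
proof -
  from nonneg_eigenvector_exists[of n, OF nonneg] obtain \<rho> v where "\<rho> \<ge> 0"
    and v_nonneg: "\<forall>i. v i \<ge> 0" and v_nonzero: "\<exists>i. v i \<noteq> 0"
    and eigen: "\<forall>i. (\<Sum>j\<in>UNIV. n i j * v j) = \<rho> * v i"
    by blast
  show ?thesis
  proof (rule that[OF \<open>\<rho> \<ge> 0\<close>])
    show "v i > 0" for i
      using irreducible_eigenvector_positive[of n, OF nonneg irr] v_nonneg v_nonzero eigen by blast
    show "(\<Sum>j\<in>UNIV. n i j * v j) = \<rho> * v i" for i using eigen by blast
  qed
qed


definition quad_form :: "'a set \<Rightarrow> ('a \<Rightarrow> 'a \<Rightarrow> real) \<Rightarrow> ('a \<Rightarrow> real) \<Rightarrow> real" where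
  "quad_form F a v = (\<Sum>x\<in>F. \<Sum>y\<in>F. a x y * v x * v y)"

definition sq_norm :: "'a set \<Rightarrow> ('a \<Rightarrow> real) \<Rightarrow> real" where
  "sq_norm F v = (\<Sum>x\<in>F. (v x)\<^sup>2)"

definition mat_apply :: "'a set \<Rightarrow> ('a \<Rightarrow> 'a \<Rightarrow> real) \<Rightarrow> ('a \<Rightarrow> real) \<Rightarrow> 'a \<Rightarrow> real" where
  "mat_apply F a v = (\<lambda>x. \<Sum>y\<in>F. a x y * v y)"

lemma sq_norm_nonneg: "sq_norm F v \<ge> 0"
  unfolding sq_norm_def by (intro sum_nonneg) auto

(* The energy functional of the discrete coarea formula: for a level function h it
   integrates, over all levels t, the boundary term of the super-level set {h > t}. *)
definition cut_energy ::
  "'a set \<Rightarrow> ('a \<Rightarrow> 'a \<Rightarrow> real) \<Rightarrow> real \<Rightarrow> ('a \<Rightarrow> real) \<Rightarrow> ('a \<Rightarrow> real) \<Rightarrow> real" where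
  "cut_energy F b \<rho> p h =
     (\<Sum>x\<in>F. (\<Sum>y\<in>F. b x y * max (h x - h y) 0) + (\<rho> * p x - (\<Sum>y\<in>F. b x y)) * h x)"

lemma cut_energy_peel:
  assumes F: "finite F" and h_nonneg: "\<And>x. x \<in> F \<Longrightarrow> h x \<ge> 0"
    and S_def: "S = {x\<in>F. h x > 0}" and t_le: "\<And>x. x \<in> S \<Longrightarrow> t \<le> h x"
  shows "cut_energy F b \<rho> p h
       = cut_energy F b \<rho> p (\<lambda>x. h x - (if x \<in> S then t else 0))
         + t * (\<Sum>x\<in>S. \<rho> * p x - (\<Sum>y\<in>S. b x y))"
proof -
  define g where "g x = h x - (if x \<in> S then t else 0)" for x
  have SF: "S \<subseteq> F" unfolding S_def by auto
  have h_zero: "h x = 0" if "x \<in> F" "x \<notin> S" for x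
    using that h_nonneg[of x] unfolding S_def by auto
  have pw: "max (h x - h y) 0 = max (g x - g y) 0 + (if x \<in> S \<and> y \<notin> S then t else 0)"
    if "x \<in> F" "y \<in> F" for x y
    using that h_zero[of x] h_zero[of y] h_nonneg[of x] h_nonneg[of y] t_le[of x] t_le[of y]
    unfolding g_def by (cases "x \<in> S"; cases "y \<in> S") (auto simp: max_def)
  have split: "(\<Sum>y\<in>F. b x y) = (\<Sum>y\<in>S. b x y) + (\<Sum>y\<in>F - S. b x y)" for x
    using F SF by (metis add.commute sum.subset_diff)
  have cut_row: "(\<Sum>y\<in>F. b x y * max (h x - h y) 0) = (\<Sum>y\<in>F. b x y * max (g x - g y) 0)
        + (if x \<in> S then t * (\<Sum>y\<in>F - S. b x y) else 0)" if "x \<in> F" for x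
  proof -
    have "(\<Sum>y\<in>F. b x y * max (h x - h y) 0) = (\<Sum>y\<in>F. b x y * max (g x - g y) 0
          + (if x \<in> S then t * (if y \<in> F - S then b x y else 0) else 0))"
      using pw[OF that] by (intro sum.cong) (auto simp: algebra_simps)
    also have "\<dots> = (\<Sum>y\<in>F. b x y * max (g x - g y) 0)
          + (if x \<in> S then t * (\<Sum>y\<in>F. if y \<in> F - S then b x y else 0) else 0)"
      by (simp add: sum.distrib sum_distrib_left)
    also have "(\<Sum>y\<in>F. if y \<in> F - S then b x y else 0) = (\<Sum>y\<in>F - S. b x y)"
      using F by (simp add: sum.If_cases Int_absorb1 Diff_eq Compl_eq)
    finally show ?thesis .
  qed
  have "cut_energy F b \<rho> p h
      = (\<Sum>x\<in>F. ((\<Sum>y\<in>F. b x y * max (g x - g y) 0) + (\<rho> * p x - (\<Sum>y\<in>F. b x y)) * g x)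
           + (if x \<in> S then t * (\<rho> * p x - (\<Sum>y\<in>S. b x y)) else 0))"
    unfolding cut_energy_def
  proof (intro sum.cong refl)
    fix x assume "x \<in> F"
    then show "(\<Sum>y\<in>F. b x y * max (h x - h y) 0) + (\<rho> * p x - (\<Sum>y\<in>F. b x y)) * h x
      = ((\<Sum>y\<in>F. b x y * max (g x - g y) 0) + (\<rho> * p x - (\<Sum>y\<in>F. b x y)) * g x)
           + (if x \<in> S then t * (\<rho> * p x - (\<Sum>y\<in>S. b x y)) else 0)"
      unfolding cut_row[OF \<open>x \<in> F\<close>] split[of x] g_def
      by (cases "x \<in> S") (simp_all add: algebra_simps)
  qed
  also have "\<dots> = cut_energy F b \<rho> p g + t * (\<Sum>x\<in>S. \<rho> * p x - (\<Sum>y\<in>S. b x y))"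
    unfolding cut_energy_def
    using F SF by (simp add: sum.distrib sum_distrib_left sum.If_cases Int_absorb1)
  finally show ?thesis unfolding g_def .
qed

(* Proof by induction on the size of the support, peeling off the lowest level. *)
lemma coarea_inequality:
  fixes b :: "'a \<Rightarrow> 'a \<Rightarrow> real" and p :: "'a \<Rightarrow> real"
  assumes F: "finite F"
    and isoperimetric: "\<And>S. finite S \<Longrightarrow> S \<subseteq> F \<Longrightarrow>
           (\<Sum>x\<in>S. \<rho> * p x - (\<Sum>y\<in>S. b x y)) \<ge> \<kappa> * (\<Sum>x\<in>S. p x)"
    and h_nonneg: "\<And>x. x \<in> F \<Longrightarrow> h x \<ge> 0"
  shows "cut_energy F b \<rho> p h \<ge> \<kappa> * (\<Sum>x\<in>F. p x * h x)"
  using h_nonneg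
proof (induction "card {x\<in>F. h x > 0}" arbitrary: h rule: less_induct)
  case less
  define S where "S = {x\<in>F. h x > 0}"
  have SF: "S \<subseteq> F" and S_fin: "finite S" using F unfolding S_def by auto
  show ?case
  proof (cases "S = {}")
    case True
    then have "\<forall>x\<in>F. h x = 0" using less.prems unfolding S_def by force
    then show ?thesis unfolding cut_energy_def by simp
  next
    case False
    define t where "t = Min (h ` S)"
    have "t \<in> h ` S" using Min_in[of "h ` S"] S_fin False unfolding t_def by auto
    then obtain x0 where x0: "x0 \<in> S" "h x0 = t" by auto
    have t_le: "t \<le> h x" if "x \<in> S" for x using S_fin that unfolding t_def by simp
    have t_pos: "t > 0" using x0 unfolding S_def by simp
    define g where "g x = h x - (if x \<in> S then t else 0)" for x
    have g_nonneg: "g x \<ge> 0" if "x \<in> F" for x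
      using t_le less.prems[OF that] unfolding g_def by auto
    have "card {x\<in>F. g x > 0} \<le> card (S - {x0})"
      using x0 S_fin unfolding g_def S_def by (intro card_mono) auto
    also have "\<dots> < card S" using x0 S_fin by (meson card_Diff1_less)
    finally have IH: "cut_energy F b \<rho> p g \<ge> \<kappa> * (\<Sum>x\<in>F. p x * g x)"
      using less.hyps g_nonneg unfolding S_def by blast
    have mass: "(\<Sum>x\<in>F. p x * h x) = (\<Sum>x\<in>F. p x * g x) + t * (\<Sum>x\<in>S. p x)"
    proof -
      have "(\<Sum>x\<in>F. p x * h x) = (\<Sum>x\<in>F. p x * g x + (if x \<in> S then t * p x else 0))"
        unfolding g_def by (intro sum.cong) (auto simp: algebra_simps)
      also have "\<dots> = (\<Sum>x\<in>F. p x * g x) + t * (\<Sum>x\<in>S. p x)"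
        using F SF by (simp add: sum.distrib sum_distrib_left sum.If_cases Int_absorb1)
      finally show ?thesis .
    qed
    have "t * (\<kappa> * (\<Sum>x\<in>S. p x)) \<le> t * (\<Sum>x\<in>S. \<rho> * p x - (\<Sum>y\<in>S. b x y))"
      using isoperimetric[OF S_fin SF] t_pos by (intro mult_left_mono) auto
    then show ?thesis
      using IH cut_energy_peel[OF F less.prems S_def t_le, of b \<rho> p] unfolding mass g_def
      by (simp add: algebra_simps)
  qed
qed

lemma abs_mult_le_young:
  fixes a c s :: real
  assumes "s > 0" "c \<ge> 0"
  shows "\<bar>a\<bar> * c \<le> (s * a\<^sup>2 + c\<^sup>2 / s) / 2"
proof -
  have "0 \<le> (s * \<bar>a\<bar> - c)\<^sup>2 / s" using assms by simp
  also have "(s * \<bar>a\<bar> - c)\<^sup>2 / s = s * a\<^sup>2 - 2 * \<bar>a\<bar> * c + c\<^sup>2 / s"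
    using assms by (simp add: power2_eq_square field_simps)
  finally show ?thesis by simp
qed

(* The cut energy of f^2 is bounded, via |f x^2 - f y^2| = |f x - f y| (f x + f y) and
   Young's inequality, by a combination of the "difference" and "sum" Dirichlet energies. *)
lemma cut_energy_of_square_le:
  fixes b :: "'a \<Rightarrow> 'a \<Rightarrow> real" and f \<beta> :: "'a \<Rightarrow> real"
  assumes s: "s > 0" and b_nonneg: "\<And>x y. b x y \<ge> 0" and \<beta>_nonneg: "\<And>x. \<beta> x \<ge> 0"
    and f_nonneg: "\<And>x. x \<in> F \<Longrightarrow> f x \<ge> 0"
  shows "(\<Sum>x\<in>F. (\<Sum>y\<in>F. b x y * max ((f x)\<^sup>2 - (f y)\<^sup>2) 0) + \<beta> x * (f x)\<^sup>2)
       \<le> (s / 2) * ((\<Sum>x\<in>F. \<Sum>y\<in>F. b x y * (f x - f y)\<^sup>2) + (\<Sum>x\<in>F. \<beta> x * (f x)\<^sup>2))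
         + (1 / (2 * s)) * ((\<Sum>x\<in>F. \<Sum>y\<in>F. b x y * (f x + f y)\<^sup>2) + (\<Sum>x\<in>F. \<beta> x * (f x)\<^sup>2))"
proof -
  have pair: "max ((f x)\<^sup>2 - (f y)\<^sup>2) 0 \<le> (s * (f x - f y)\<^sup>2 + (f x + f y)\<^sup>2 / s) / 2"
    if "x \<in> F" "y \<in> F" for x y
  proof -
    have sum_nonneg: "f x + f y \<ge> 0" using f_nonneg that by force
    have "(f x)\<^sup>2 - (f y)\<^sup>2 = (f x - f y) * (f x + f y)" by (simp add: power2_eq_square algebra_simps)
    also have "\<dots> \<le> \<bar>f x - f y\<bar> * (f x + f y)" using sum_nonneg by (intro mult_right_mono) auto
    finally have "max ((f x)\<^sup>2 - (f y)\<^sup>2) 0 \<le> \<bar>f x - f y\<bar> * (f x + f y)" using sum_nonneg by simp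
    also have "\<dots> \<le> (s * (f x - f y)\<^sup>2 + (f x + f y)\<^sup>2 / s) / 2"
      using abs_mult_le_young[OF s sum_nonneg] by simp
    finally show ?thesis .
  qed
  have diag: "(f x)\<^sup>2 \<le> (s * (f x)\<^sup>2 + (f x)\<^sup>2 / s) / 2" if "x \<in> F" for x
    using abs_mult_le_young[OF s, of "f x" "f x"] f_nonneg[OF that] by (simp add: power2_eq_square)
  have "(\<Sum>x\<in>F. (\<Sum>y\<in>F. b x y * max ((f x)\<^sup>2 - (f y)\<^sup>2) 0) + \<beta> x * (f x)\<^sup>2)
      \<le> (\<Sum>x\<in>F. (\<Sum>y\<in>F. b x y * ((s * (f x - f y)\<^sup>2 + (f x + f y)\<^sup>2 / s) / 2))
              + \<beta> x * ((s * (f x)\<^sup>2 + (f x)\<^sup>2 / s) / 2))"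
    using pair diag b_nonneg \<beta>_nonneg by (intro sum_mono add_mono mult_left_mono) auto
  also have "\<dots> = (\<Sum>x\<in>F. (s / 2) * ((\<Sum>y\<in>F. b x y * (f x - f y)\<^sup>2) + \<beta> x * (f x)\<^sup>2)
        + (1 / (2 * s)) * ((\<Sum>y\<in>F. b x y * (f x + f y)\<^sup>2) + \<beta> x * (f x)\<^sup>2))"
  proof (intro sum.cong refl)
    fix x
    have "(\<Sum>y\<in>F. b x y * ((s * (f x - f y)\<^sup>2 + (f x + f y)\<^sup>2 / s) / 2))
       = (\<Sum>y\<in>F. (s / 2) * (b x y * (f x - f y)\<^sup>2) + (1 / (2 * s)) * (b x y * (f x + f y)\<^sup>2))"
      by (intro sum.cong refl) (simp add: field_simps)
    also have "\<dots> = (s / 2) * (\<Sum>y\<in>F. b x y * (f x - f y)\<^sup>2) + (1 / (2 * s)) * (\<Sum>y\<in>F. b x y * (f x + f y)\<^sup>2)"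
      by (simp add: sum.distrib sum_distrib_left)
    finally have "(\<Sum>y\<in>F. b x y * ((s * (f x - f y)\<^sup>2 + (f x + f y)\<^sup>2 / s) / 2))
       = (s / 2) * (\<Sum>y\<in>F. b x y * (f x - f y)\<^sup>2) + (1 / (2 * s)) * (\<Sum>y\<in>F. b x y * (f x + f y)\<^sup>2)" .
    then show "(\<Sum>y\<in>F. b x y * ((s * (f x - f y)\<^sup>2 + (f x + f y)\<^sup>2 / s) / 2))
              + \<beta> x * ((s * (f x)\<^sup>2 + (f x)\<^sup>2 / s) / 2)
      = (s / 2) * ((\<Sum>y\<in>F. b x y * (f x - f y)\<^sup>2) + \<beta> x * (f x)\<^sup>2)
        + (1 / (2 * s)) * ((\<Sum>y\<in>F. b x y * (f x + f y)\<^sup>2) + \<beta> x * (f x)\<^sup>2)"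
      using s by (simp add: field_simps)
  qed
  also have "\<dots> = (s / 2) * ((\<Sum>x\<in>F. \<Sum>y\<in>F. b x y * (f x - f y)\<^sup>2) + (\<Sum>x\<in>F. \<beta> x * (f x)\<^sup>2))
         + (1 / (2 * s)) * ((\<Sum>x\<in>F. \<Sum>y\<in>F. b x y * (f x + f y)\<^sup>2) + (\<Sum>x\<in>F. \<beta> x * (f x)\<^sup>2))"
    by (simp add: sum.distrib sum_distrib_left distrib_left)
  finally show ?thesis .
qed

lemma quad_form_le_energy:
  assumes b_sym: "\<And>x y. b x y = b y x" and b_nonneg: "\<And>x y. b x y \<ge> 0"
  shows "quad_form F b f \<le> (\<Sum>x\<in>F. \<Sum>y\<in>F. b x y * (f x)\<^sup>2)"
proof -
  have "quad_form F b f \<le> (\<Sum>x\<in>F. \<Sum>y\<in>F. b x y * (((f x)\<^sup>2 + (f y)\<^sup>2) / 2))"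
    unfolding quad_form_def
  proof (intro sum_mono)
    fix x y
    have "0 \<le> (f x - f y)\<^sup>2" by simp
    then have "f x * f y \<le> ((f x)\<^sup>2 + (f y)\<^sup>2) / 2"
      by (simp add: power2_diff power2_eq_square algebra_simps)
    then show "b x y * f x * f y \<le> b x y * (((f x)\<^sup>2 + (f y)\<^sup>2) / 2)"
      using b_nonneg[of x y] mult_left_mono by (simp add: mult.assoc)
  qed
  also have "\<dots> = ((\<Sum>x\<in>F. \<Sum>y\<in>F. b x y * (f x)\<^sup>2) + (\<Sum>x\<in>F. \<Sum>y\<in>F. b x y * (f y)\<^sup>2)) / 2"
    by (simp add: add_divide_distrib distrib_left sum.distrib sum_divide_distrib)
  also have "(\<Sum>x\<in>F. \<Sum>y\<in>F. b x y * (f y)\<^sup>2) = (\<Sum>x\<in>F. \<Sum>y\<in>F. b x y * (f x)\<^sup>2)"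
    by (subst sum.swap) (simp add: b_sym)
  finally show ?thesis by simp
qed

lemma cheeger_inequality:
  fixes b :: "'a \<Rightarrow> 'a \<Rightarrow> real" and p f :: "'a \<Rightarrow> real"
  assumes F: "finite F" and \<rho>: "\<rho> > 0" and \<kappa>: "\<kappa> > 0"
    and b_sym: "\<And>x y. b x y = b y x" and b_nonneg: "\<And>x y. b x y \<ge> 0"
    and row_le: "\<And>x. (\<Sum>y\<in>F. b x y) \<le> \<rho> * p x"
    and isoperimetric: "\<And>S. finite S \<Longrightarrow> S \<subseteq> F \<Longrightarrow>
           (\<Sum>x\<in>S. \<rho> * p x - (\<Sum>y\<in>S. b x y)) \<ge> \<kappa> * (\<Sum>x\<in>S. p x)"
    and f_nonneg: "\<And>x. x \<in> F \<Longrightarrow> f x \<ge> 0"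
  shows "quad_form F b f \<le> (\<rho> - \<kappa>\<^sup>2 / (8 * \<rho>)) * (\<Sum>x\<in>F. p x * (f x)\<^sup>2)"
proof -
  define \<beta> where "\<beta> x = \<rho> * p x - (\<Sum>y\<in>F. b x y)" for x
  define s where "s = 4 * \<rho> / \<kappa>"
  define Q where "Q = quad_form F b f"
  define B where "B = (\<Sum>x\<in>F. \<Sum>y\<in>F. b x y * (f x)\<^sup>2)"
  define N where "N = (\<Sum>x\<in>F. p x * (f x)\<^sup>2)"
  have s: "s > 0" using \<rho> \<kappa> unfolding s_def by simp
  have \<beta>_nonneg: "\<beta> x \<ge> 0" for x using row_le[of x] unfolding \<beta>_def by simp
  have B_swap: "(\<Sum>x\<in>F. \<Sum>y\<in>F. b x y * (f y)\<^sup>2) = B"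
    unfolding B_def by (subst sum.swap) (simp add: b_sym)
  have diff_energy: "(\<Sum>x\<in>F. \<Sum>y\<in>F. b x y * (f x - f y)\<^sup>2) = 2 * B - 2 * Q"
    using B_swap unfolding Q_def B_def quad_form_def
    by (simp add: power2_diff algebra_simps sum.distrib sum_subtractf sum_distrib_left)
  have sum_energy: "(\<Sum>x\<in>F. \<Sum>y\<in>F. b x y * (f x + f y)\<^sup>2) = 2 * B + 2 * Q"
    using B_swap unfolding Q_def B_def quad_form_def
    by (simp add: power2_sum algebra_simps sum.distrib sum_distrib_left)
  have slack: "(\<Sum>x\<in>F. \<beta> x * (f x)\<^sup>2) = \<rho> * N - B"
    unfolding \<beta>_def N_def B_def
    by (simp add: algebra_simps sum_subtractf sum_distrib_left sum_distrib_right)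
  have slack_nonneg: "(\<Sum>x\<in>F. \<beta> x * (f x)\<^sup>2) \<ge> 0" using \<beta>_nonneg by (intro sum_nonneg) auto
  have Q_le_B: "Q \<le> B" unfolding Q_def B_def by (rule quad_form_le_energy[where b=b, OF b_sym b_nonneg])
  have "\<kappa> * N \<le> cut_energy F b \<rho> p (\<lambda>x. (f x)\<^sup>2)"
    using coarea_inequality[OF F isoperimetric, of "\<lambda>x. (f x)\<^sup>2"] unfolding N_def by simp
  also have "\<dots> = (\<Sum>x\<in>F. (\<Sum>y\<in>F. b x y * max ((f x)\<^sup>2 - (f y)\<^sup>2) 0) + \<beta> x * (f x)\<^sup>2)"
    unfolding cut_energy_def \<beta>_def ..
  also have "\<dots> \<le> (s / 2) * (2 * B - 2 * Q + (\<rho> * N - B)) + (1 / (2 * s)) * (2 * B + 2 * Q + (\<rho> * N - B))"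
    using cut_energy_of_square_le[where F=F and b=b and \<beta>=\<beta> and f=f, OF s b_nonneg \<beta>_nonneg f_nonneg]
    unfolding diff_energy sum_energy slack .
  also have "\<dots> \<le> (s / 2) * (2 * \<rho> * N - 2 * Q) + (1 / (2 * s)) * (4 * \<rho> * N)"
  proof -
    have B_le: "B \<le> \<rho> * N" using slack slack_nonneg by linarith
    have "2 * B - 2 * Q + (\<rho> * N - B) \<le> 2 * \<rho> * N - 2 * Q" using B_le by linarith
    moreover have "2 * B + 2 * Q + (\<rho> * N - B) \<le> 4 * \<rho> * N" using B_le Q_le_B by linarith
    ultimately show ?thesis using s by (intro add_mono mult_left_mono) auto
  qed
  also have "\<dots> = (4 * \<rho> / \<kappa>) * (\<rho> * N - Q) + \<kappa> * N / 2"
    unfolding s_def using \<rho> \<kappa> by (simp add: field_simps)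
  finally have "\<kappa> * N / 2 \<le> (4 * \<rho> / \<kappa>) * (\<rho> * N - Q)" by simp
  then have "(\<kappa> / (4 * \<rho>)) * (\<kappa> * N / 2) \<le> \<rho> * N - Q"
    using \<rho> \<kappa> by (simp add: field_simps)
  then show ?thesis unfolding Q_def N_def by (simp add: power2_eq_square algebra_simps)
qed

(* A bound on the quadratic form of a nonnegative matrix over nonnegative vectors extends
   to all vectors in absolute value, since |q v| \<le> q |v|. *)
lemma quad_form_abs_le:
  assumes a_nonneg: "\<And>x y. a x y \<ge> 0"
    and bound: "\<And>v. (\<And>x. x \<in> F \<Longrightarrow> v x \<ge> 0) \<Longrightarrow> quad_form F a v \<le> \<theta> * sq_norm F v"
  shows "\<bar>quad_form F a v\<bar> \<le> \<theta> * sq_norm F v"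
proof -
  have "\<bar>quad_form F a v\<bar> \<le> (\<Sum>x\<in>F. \<bar>\<Sum>y\<in>F. a x y * v x * v y\<bar>)"
    unfolding quad_form_def by (rule sum_abs)
  also have "\<dots> \<le> (\<Sum>x\<in>F. \<Sum>y\<in>F. \<bar>a x y * v x * v y\<bar>)" by (intro sum_mono sum_abs)
  also have "\<dots> = quad_form F a (\<lambda>x. \<bar>v x\<bar>)" unfolding quad_form_def using a_nonneg by (simp add: abs_mult)
  also have "\<dots> \<le> \<theta> * sq_norm F (\<lambda>x. \<bar>v x\<bar>)" by (rule bound) simp
  also have "\<dots> = \<theta> * sq_norm F v" unfolding sq_norm_def by simp
  finally show ?thesis .
qed

(* For a symmetric matrix, |q v| \<le> \<theta> |v|^2 for all v implies |A u| \<le> \<theta> |u|: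
   polarization with v = t A u \<plusminus> u and t = 1/\<theta>. *)
lemma symmetric_norm_le_from_quad_form:
  assumes a_sym: "\<And>x y. a x y = a y x" and \<theta>: "\<theta> \<ge> 0"
    and form_bound: "\<And>v. \<bar>quad_form F a v\<bar> \<le> \<theta> * sq_norm F v"
  shows "sq_norm F (mat_apply F a u) \<le> \<theta>\<^sup>2 * sq_norm F u"
proof -
  define h where "h = mat_apply F a u"
  define H where "H = sq_norm F h"
  define U where "U = sq_norm F u"
  have H_nonneg: "H \<ge> 0" unfolding H_def by (rule sq_norm_nonneg)
  have cross1: "(\<Sum>x\<in>F. \<Sum>y\<in>F. a x y * h x * u y) = H"
  proof -
    have "(\<Sum>x\<in>F. \<Sum>y\<in>F. a x y * h x * u y) = (\<Sum>x\<in>F. h x * (\<Sum>y\<in>F. a x y * u y))"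
      by (simp add: sum_distrib_left mult_ac)
    also have "\<dots> = H" unfolding H_def sq_norm_def h_def mat_apply_def by (simp add: power2_eq_square)
    finally show ?thesis .
  qed
  have cross2: "(\<Sum>x\<in>F. \<Sum>y\<in>F. a x y * u x * h y) = H"
  proof -
    have "(\<Sum>x\<in>F. \<Sum>y\<in>F. a x y * u x * h y) = (\<Sum>y\<in>F. \<Sum>x\<in>F. a y x * h y * u x)"
      by (subst sum.swap) (simp add: a_sym mult.commute mult.left_commute)
    then show ?thesis using cross1 by simp
  qed
  have polarization: "4 * t * H \<le> \<theta> * (2 * t\<^sup>2 * H + 2 * U)" for t
  proof -
    define P where "P x = t * h x + u x" for x
    define M where "M x = t * h x - u x" for x
    have "quad_form F a P - quad_form F a M
        = (\<Sum>x\<in>F. \<Sum>y\<in>F. 2 * t * (a x y * h x * u y) + 2 * t * (a x y * u x * h y))"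
      unfolding quad_form_def P_def M_def by (simp add: sum_subtractf[symmetric] algebra_simps)
    also have "\<dots> = 4 * t * H"
      using cross1 cross2 by (simp add: sum.distrib sum_distrib_left[symmetric])
    finally have diff: "quad_form F a P - quad_form F a M = 4 * t * H" .
    have "sq_norm F P + sq_norm F M = (\<Sum>x\<in>F. 2 * t\<^sup>2 * (h x)\<^sup>2 + 2 * (u x)\<^sup>2)"
      unfolding sq_norm_def P_def M_def
      by (simp add: sum.distrib[symmetric] power2_eq_square algebra_simps)
    also have "\<dots> = 2 * t\<^sup>2 * H + 2 * U"
      unfolding H_def U_def sq_norm_def by (simp add: sum.distrib sum_distrib_left)
    finally have norms: "sq_norm F P + sq_norm F M = 2 * t\<^sup>2 * H + 2 * U" .
    have "quad_form F a P - quad_form F a M \<le> \<theta> * (sq_norm F P + sq_norm F M)"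
      using form_bound[of P] form_bound[of M] by (simp add: algebra_simps abs_le_iff)
    then show ?thesis using diff norms by simp
  qed
  have "H \<le> \<theta>\<^sup>2 * U"
  proof (cases "\<theta> = 0")
    case True
    then show ?thesis using polarization[of 1] H_nonneg by simp
  next
    case False
    then have \<theta>_pos: "\<theta> > 0" using \<theta> by simp
    have "4 * (1/\<theta>) * H \<le> \<theta> * (2 * (1/\<theta>)\<^sup>2 * H + 2 * U)" by (rule polarization)
    also have "\<dots> = 2 * H / \<theta> + 2 * \<theta> * U" using \<theta>_pos by (simp add: field_simps power2_eq_square)
    finally have "2 * H / \<theta> \<le> 2 * \<theta> * U" by simp
    then show ?thesis using \<theta>_pos by (simp add: field_simps power2_eq_square)
  qed
  then show ?thesis unfolding H_def U_def h_def .
qed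

(* For a symmetric matrix the squared norms N k = |A^k u|^2 are log-convex:
   N(k+1)^2 = <A^(k+2) u, A^k u>^2 \<le> N(k+2) N(k) by Cauchy-Schwarz. *)
lemma symmetric_iterate_log_convex:
  assumes F: "finite F" and a_sym: "\<And>x y. a x y = a y x"
  shows "(sq_norm F ((mat_apply F a ^^ Suc k) u))\<^sup>2
       \<le> sq_norm F ((mat_apply F a ^^ Suc (Suc k)) u) * sq_norm F ((mat_apply F a ^^ k) u)"
proof -
  define vec where "vec k = (mat_apply F a ^^ k) u" for k
  have vec_Suc: "vec (Suc k) x = (\<Sum>y\<in>F. a x y * vec k y)" for k x
    unfolding vec_def mat_apply_def by simp
  have "(\<Sum>x\<in>F. vec (Suc (Suc k)) x * vec k x) = (\<Sum>x\<in>F. \<Sum>y\<in>F. a x y * vec (Suc k) y * vec k x)"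
    unfolding vec_Suc[of "Suc k"] by (simp add: sum_distrib_right)
  also have "\<dots> = (\<Sum>y\<in>F. \<Sum>x\<in>F. a y x * vec k x * vec (Suc k) y)"
    by (subst sum.swap) (simp add: a_sym mult.commute mult.left_commute)
  also have "\<dots> = (\<Sum>y\<in>F. vec (Suc k) y * vec (Suc k) y)"
    unfolding vec_Suc by (simp add: sum_distrib_right mult.commute)
  finally have "(\<Sum>x\<in>F. vec (Suc (Suc k)) x * vec k x) = sq_norm F (vec (Suc k))"
    unfolding sq_norm_def by (simp add: power2_eq_square)
  then show ?thesis
    using Cauchy_Schwarz_ineq_sum[of "vec (Suc (Suc k))" "vec k" F]
    unfolding vec_def sq_norm_def by simp
qed

(* If the quadratic form of a symmetric matrix at u is at least r |u|^2 (r \<ge> 0), then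
   |A^k u|^2 \<ge> r^(2k) |u|^2: the ratios N(k+1)/N(k) are at least r^2 and nondecreasing. *)
lemma symmetric_iterate_norm_lower:
  assumes F: "finite F" and a_sym: "\<And>x y. a x y = a y x" and r: "r \<ge> 0"
    and form_lower: "quad_form F a u \<ge> r * sq_norm F u"
  shows "sq_norm F ((mat_apply F a ^^ k) u) \<ge> r^(2*k) * sq_norm F u"
proof -
  define N where "N k = sq_norm F ((mat_apply F a ^^ k) u)" for k
  have N_nonneg: "N k \<ge> 0" for k unfolding N_def by (rule sq_norm_nonneg)
  have log_convex: "(N (Suc k))\<^sup>2 \<le> N (Suc (Suc k)) * N k" for k
    unfolding N_def by (rule symmetric_iterate_log_convex[OF F a_sym])
  have N_zero: "N (Suc k) = 0" if "N k = 0" for k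
  proof -
    have "\<forall>x\<in>F. ((mat_apply F a ^^ k) u x)\<^sup>2 = 0" using that F unfolding N_def sq_norm_def
      by (subst sum_nonneg_eq_0_iff[symmetric]) auto
    then show ?thesis unfolding N_def sq_norm_def mat_apply_def by simp
  qed
  have first_ratio: "N 1 \<ge> r\<^sup>2 * N 0"
  proof -
    have "(\<Sum>x\<in>F. (mat_apply F a ^^ 1) u x * u x) = quad_form F a u"
      unfolding quad_form_def mat_apply_def
      by (simp add: sum_distrib_right sum_distrib_left mult.commute mult.left_commute)
    then have "(r * N 0)\<^sup>2 \<le> (\<Sum>x\<in>F. (mat_apply F a ^^ 1) u x * u x)\<^sup>2"
      using form_lower r N_nonneg[of 0] unfolding N_def by (intro power_mono) auto
    also have "\<dots> \<le> N 1 * N 0"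
      using Cauchy_Schwarz_ineq_sum[of "(mat_apply F a ^^ 1) u" u F] unfolding N_def sq_norm_def by simp
    finally have "r\<^sup>2 * N 0 * N 0 \<le> N 1 * N 0" by (simp add: power2_eq_square algebra_simps)
    then show ?thesis using N_nonneg[of 0] N_nonneg[of 1] by (cases "N 0 = 0") auto
  qed
  have ratio: "N (Suc k) \<ge> r\<^sup>2 * N k" for k
  proof (induction k)
    case 0 then show ?case using first_ratio by simp
  next
    case (Suc k)
    show ?case
    proof (cases "N (Suc k) = 0")
      case True then show ?thesis using N_nonneg by simp
    next
      case False
      then have N_Suc_pos: "N (Suc k) > 0" using N_nonneg[of "Suc k"] by simp
      have N_pos: "N k > 0" using N_zero[of k] False N_nonneg[of k] by force
      have "r\<^sup>2 * N k * N (Suc k) \<le> N (Suc k) * N (Suc k)"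
        using Suc.IH N_Suc_pos by (simp add: mult_right_mono)
      also have "\<dots> \<le> N (Suc (Suc k)) * N k" using log_convex[of k] by (simp add: power2_eq_square)
      finally have "(r\<^sup>2 * N (Suc k)) * N k \<le> N (Suc (Suc k)) * N k" by (simp add: algebra_simps)
      then show ?thesis using N_pos by simp
    qed
  qed
  have "N k \<ge> r^(2*k) * N 0" for k
  proof (induction k)
    case (Suc k)
    have "r^(2 * Suc k) * N 0 = r\<^sup>2 * (r^(2*k) * N 0)" by (simp add: power_add power2_eq_square algebra_simps)
    also have "\<dots> \<le> r\<^sup>2 * N k" using Suc.IH by (intro mult_left_mono) auto
    also have "\<dots> \<le> N (Suc k)" by (rule ratio)
    finally show ?case .
  qed simp
  then show ?thesis unfolding N_def by simp
qed


section \<open>Truncated matrix powers\<close>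

primrec trunc_pow :: "('a \<Rightarrow> 'a \<Rightarrow> real) \<Rightarrow> 'a set \<Rightarrow> nat \<Rightarrow> 'a \<Rightarrow> 'a \<Rightarrow> real" where
  "trunc_pow a F 0 x y = (if x = y then 1 else 0)"
| "trunc_pow a F (Suc k) x y = (\<Sum>z\<in>F. a x z * trunc_pow a F k z y)"

lemma trunc_pow_nonneg: "(\<And>x y. a x y \<ge> 0) \<Longrightarrow> trunc_pow a F k x y \<ge> 0"
  by (induction k arbitrary: x) (auto intro!: sum_nonneg)

lemma trunc_pow_mono:
  assumes "\<And>x y. a x y \<ge> 0" "F \<subseteq> G" "finite G"
  shows "trunc_pow a F k x y \<le> trunc_pow a G k x y"
proof (induction k arbitrary: x)
  case (Suc k)
  have "(\<Sum>z\<in>F. a x z * trunc_pow a F k z y) \<le> (\<Sum>z\<in>F. a x z * trunc_pow a G k z y)"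
    using Suc.IH assms(1) by (intro sum_mono mult_left_mono) auto
  also have "\<dots> \<le> (\<Sum>z\<in>G. a x z * trunc_pow a G k z y)"
    using assms trunc_pow_nonneg[of a] by (intro sum_mono2) auto
  finally show ?case by simp
qed simp

lemma mat_apply_iterate:
  assumes S: "finite S" and "x \<in> S"
  shows "(mat_apply S a ^^ k) v x = (\<Sum>z\<in>S. trunc_pow a S k x z * v z)"
  using assms(2)
proof (induction k arbitrary: x)
  case 0
  have "(\<Sum>z\<in>S. trunc_pow a S 0 x z * v z) = (\<Sum>z\<in>S. if z = x then v z else 0)"
    by (intro sum.cong) auto
  also have "\<dots> = v x" using 0 S by (simp add: sum.delta)
  finally show ?case by simp
next
  case (Suc k)
  have "(mat_apply S a ^^ Suc k) v x = (\<Sum>y\<in>S. a x y * (mat_apply S a ^^ k) v y)"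
    by (simp add: mat_apply_def)
  also have "\<dots> = (\<Sum>y\<in>S. a x y * (\<Sum>z\<in>S. trunc_pow a S k y z * v z))"
    using Suc.IH by (intro sum.cong refl) simp
  also have "\<dots> = (\<Sum>z\<in>S. \<Sum>y\<in>S. a x y * trunc_pow a S k y z * v z)"
    by (subst sum.swap) (simp add: sum_distrib_left mult.assoc)
  also have "\<dots> = (\<Sum>z\<in>S. trunc_pow a S (Suc k) x z * v z)"
    by (simp add: sum_distrib_right)
  finally show ?case .
qed

(* Upper bound: if the quadratic form of a symmetric nonnegative matrix is at most
   \<theta> |v|^2 on nonnegative vectors over F, then every entry of its k-th truncated power
   is at most \<theta>^k, because the columns have norm at most \<theta>^k. *)
lemma trunc_pow_le_power:
  assumes F: "finite F" and x: "x \<in> F"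
    and a_sym: "\<And>x y. a x y = a y x" and a_nonneg: "\<And>x y. a x y \<ge> 0" and \<theta>: "\<theta> \<ge> 0"
    and form_bound: "\<And>v. (\<And>x. x \<in> F \<Longrightarrow> v x \<ge> 0) \<Longrightarrow> quad_form F a v \<le> \<theta> * sq_norm F v"
  shows "trunc_pow a F k x y \<le> \<theta>^k"
proof -
  define N where "N k = sq_norm F (\<lambda>z. trunc_pow a F k z y)" for k
  have step: "N (Suc k) \<le> \<theta>\<^sup>2 * N k" for k
  proof -
    have "(\<lambda>z. trunc_pow a F (Suc k) z y) = mat_apply F a (\<lambda>z. trunc_pow a F k z y)"
      by (simp add: mat_apply_def)
    then show ?thesis
      unfolding N_def
      using symmetric_norm_le_from_quad_form[OF a_sym \<theta> quad_form_abs_le[OF a_nonneg form_bound]]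
      by simp
  qed
  have base: "N 0 \<le> 1"
  proof -
    have "N 0 = (\<Sum>z\<in>F. if z = y then 1 else 0)" unfolding N_def sq_norm_def by (intro sum.cong) auto
    also have "\<dots> \<le> 1" using F by (simp add: sum.delta)
    finally show ?thesis .
  qed
  have N_le: "N k \<le> \<theta>^(2*k)" for k
  proof (induction k)
    case (Suc k)
    have "N (Suc k) \<le> \<theta>\<^sup>2 * N k" by (rule step)
    also have "\<dots> \<le> \<theta>\<^sup>2 * \<theta>^(2*k)" using Suc.IH by (intro mult_left_mono) auto
    also have "\<dots> = \<theta>^(2 * Suc k)" by (simp add: power_add power2_eq_square power_mult_distrib mult_ac)
    finally show ?case .
  qed (use base in simp)
  have "(trunc_pow a F k x y)\<^sup>2 \<le> N k"
    unfolding N_def sq_norm_def using F x by (intro member_le_sum) auto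
  also have "\<dots> \<le> (\<theta>^k)\<^sup>2" using N_le[of k] by (simp add: power_mult[symmetric] mult.commute)
  finally show ?thesis by (rule power2_le_imp_le) (simp add: \<theta>)
qed

lemma trunc_pow_entry_lower:
  fixes a :: "'a \<Rightarrow> 'a \<Rightarrow> real" and W :: "'a \<Rightarrow> real"
  assumes S: "finite S" "S \<noteq> {}" and a_sym: "\<And>x y. a x y = a y x"
    and a_nonneg: "\<And>x y. a x y \<ge> 0" and r: "r > 0" and wmin: "wmin > 0"
    and W_lower: "\<And>x. x \<in> S \<Longrightarrow> wmin \<le> W x" and W_upper: "\<And>x. x \<in> S \<Longrightarrow> W x \<le> wmax"
    and form_lower: "quad_form S a W \<ge> r * sq_norm S W"
  shows "\<exists>x\<in>S. \<exists>y\<in>S. wmin / (real (card S) * wmax) * r^k \<le> trunc_pow a S k x y"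
proof -
  define T where "T = Max ((\<lambda>p. trunc_pow a S k (fst p) (snd p)) ` (S \<times> S))"
  have fin: "finite ((\<lambda>p. trunc_pow a S k (fst p) (snd p)) ` (S \<times> S))" using S by simp
  have ne: "(\<lambda>p. trunc_pow a S k (fst p) (snd p)) ` (S \<times> S) \<noteq> {}" using S by simp
  have le_T: "trunc_pow a S k x y \<le> T" if "x \<in> S" "y \<in> S" for x y
    unfolding T_def using fin that by (intro Max_ge) (auto intro!: image_eqI[where x="(x,y)"])
  obtain x y where xy: "x \<in> S" "y \<in> S" "trunc_pow a S k x y = T"
    using Max_in[OF fin ne] unfolding T_def[symmetric] by auto
  have T_nonneg: "T \<ge> 0" using xy trunc_pow_nonneg[of a, OF a_nonneg] by metis
  have card_pos: "real (card S) > 0" using S by (simp add: card_gt_0_iff)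
  have wmax: "wmax > 0" using W_lower[OF xy(1)] W_upper[OF xy(1)] wmin by linarith
  have W_pos: "W z > 0" if "z \<in> S" for z using W_lower[OF that] wmin by simp
  have iterate_bounds: "0 \<le> (mat_apply S a ^^ k) W z \<and> (mat_apply S a ^^ k) W z \<le> real (card S) * (T * wmax)"
    if "z \<in> S" for z
  proof -
    have "(\<Sum>y\<in>S. trunc_pow a S k z y * W y) \<le> (\<Sum>y\<in>S. T * wmax)"
      using le_T[OF that] W_upper W_pos trunc_pow_nonneg[of a, OF a_nonneg] T_nonneg
      by (intro sum_mono mult_mono) (auto simp: less_imp_le)
    moreover have "0 \<le> (\<Sum>y\<in>S. trunc_pow a S k z y * W y)"
      using trunc_pow_nonneg[of a, OF a_nonneg] W_pos by (intro sum_nonneg) (simp add: less_imp_le)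
    ultimately show ?thesis unfolding mat_apply_iterate[OF S(1) that] by simp
  qed
  have "r^(2*k) * (real (card S) * wmin\<^sup>2) \<le> r^(2*k) * sq_norm S W"
  proof -
    have "real (card S) * wmin\<^sup>2 = (\<Sum>x\<in>S. wmin\<^sup>2)" by simp
    also have "\<dots> \<le> sq_norm S W"
      unfolding sq_norm_def using W_lower wmin by (intro sum_mono power_mono) auto
    finally show ?thesis using r by (intro mult_left_mono) auto
  qed
  also have "\<dots> \<le> sq_norm S ((mat_apply S a ^^ k) W)"
    by (rule symmetric_iterate_norm_lower[OF S(1) a_sym less_imp_le[OF r] form_lower])
  also have "\<dots> \<le> (\<Sum>x\<in>S. (real (card S) * (T * wmax))\<^sup>2)"
    unfolding sq_norm_def using iterate_bounds by (intro sum_mono power_mono) auto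
  also have "\<dots> = real (card S) * (real (card S) * (T * wmax))\<^sup>2" by simp
  finally have "real (card S) * (r^k * wmin)\<^sup>2 \<le> real (card S) * (real (card S) * (T * wmax))\<^sup>2"
    unfolding power_even_eq power_mult_distrib by (simp only: mult_ac)
  then have "(r^k * wmin)\<^sup>2 \<le> (real (card S) * (T * wmax))\<^sup>2"
    using card_pos by (rule mult_left_le_imp_le)
  then have "r^k * wmin \<le> real (card S) * (T * wmax)"
    by (rule power2_le_imp_le) (use T_nonneg wmax in simp)
  then have "wmin / (real (card S) * wmax) * r^k \<le> T"
    using card_pos wmax by (simp add: pos_divide_le_eq mult_ac)
  then show ?thesis using xy by blast
qed

section \<open>Exponential growth rates of sequences\<close>

lemma limsup_root_ge:
  fixes a :: "nat \<Rightarrow> real"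
  assumes \<gamma>: "\<gamma> > 0" and r: "r > 0" and often: "\<And>K. \<exists>N\<ge>K. \<gamma> * r^N \<le> a N"
  shows "ereal r \<le> limsup (\<lambda>N. ereal (root N (a N)))"
proof (rule ccontr)
  assume "\<not> ereal r \<le> limsup (\<lambda>N. ereal (root N (a N)))"
  then have "limsup (\<lambda>N. ereal (root N (a N))) < ereal r" by simp
  then obtain z where z1: "limsup (\<lambda>N. ereal (root N (a N))) < z" and z2: "z < ereal r"
    using dense by blast
  then obtain r' where z: "z = ereal r'" by (cases z) auto
  have "eventually (\<lambda>N. ereal (root N (a N)) < ereal r') sequentially"
    using z1 z by (intro Limsup_lessD) simp
  moreover have "(\<lambda>N. root N \<gamma> * r) \<longlonglongrightarrow> 1 * r" by (intro tendsto_mult LIMSEQ_root_const \<gamma> tendsto_const)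
  then have "eventually (\<lambda>N. r' < root N \<gamma> * r) sequentially"
    using order_tendstoD(1) z2 z by simp
  ultimately have "eventually (\<lambda>N. root N (a N) < r' \<and> r' < root N \<gamma> * r \<and> N \<ge> 1) sequentially"
    using eventually_ge_at_top[of 1] by eventually_elim auto
  then obtain K where K: "\<And>N. N \<ge> K \<Longrightarrow> root N (a N) < r' \<and> r' < root N \<gamma> * r \<and> N \<ge> 1"
    unfolding eventually_sequentially by blast
  obtain N where "N \<ge> K" and lower: "\<gamma> * r^N \<le> a N" using often by blast
  with K have N: "N \<ge> 1" "root N (a N) < r'" "r' < root N \<gamma> * r" by auto
  have "root N \<gamma> * r = root N (\<gamma> * r^N)"
    using N r by (simp add: real_root_mult real_root_power_cancel)
  also have "\<dots> \<le> root N (a N)" using N lower by (intro real_root_le_mono) auto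
  finally show False using N by simp
qed

lemma liminf_root_sandwich:
  fixes a :: "nat \<Rightarrow> real"
  assumes c1: "c1 > 0" and c2: "c2 > 0" and r: "r \<ge> 0"
    and lower: "\<And>k. c1 * r^k \<le> a k" and upper: "\<And>k. a k \<le> c2 * r^k"
  shows "liminf (\<lambda>k. ereal (root k (a k))) = ereal r"
proof -
  have root_lim: "(\<lambda>k. ereal (root k c * r)) \<longlonglongrightarrow> ereal r" if "c > 0" for c
  proof -
    have "(\<lambda>k. root k c * r) \<longlonglongrightarrow> 1 * r" by (intro tendsto_mult LIMSEQ_root_const that tendsto_const)
    then show ?thesis by simp
  qed
  have root_scaled: "root k (c * r^k) = root k c * r" if "k \<ge> 1" for c k
    using that r by (simp add: real_root_mult real_root_power_cancel)
  have "ereal r = liminf (\<lambda>k. ereal (root k c1 * r))"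
    using lim_imp_Liminf[OF _ root_lim[OF c1]] by simp
  also have "\<dots> \<le> liminf (\<lambda>k. ereal (root k (a k)))"
  proof (intro Liminf_mono eventually_sequentiallyI[of 1])
    fix k :: nat assume k: "1 \<le> k"
    have "root k c1 * r = root k (c1 * r^k)" using root_scaled[OF k] by simp
    also have "\<dots> \<le> root k (a k)" using k lower[of k] by (intro real_root_le_mono) auto
    finally show "ereal (root k c1 * r) \<le> ereal (root k (a k))" by simp
  qed
  finally have ge: "ereal r \<le> liminf (\<lambda>k. ereal (root k (a k)))" .
  have "liminf (\<lambda>k. ereal (root k (a k))) \<le> liminf (\<lambda>k. ereal (root k c2 * r))"
  proof (intro Liminf_mono eventually_sequentiallyI[of 1])
    fix k :: nat assume k: "1 \<le> k"
    have "root k (a k) \<le> root k (c2 * r^k)" using k upper[of k] by (intro real_root_le_mono) auto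
    also have "\<dots> = root k c2 * r" using root_scaled[OF k] by simp
    finally show "ereal (root k (a k)) \<le> ereal (root k c2 * r)" by simp
  qed
  also have "\<dots> = ereal r"
    using lim_imp_Liminf[OF _ root_lim[OF c2]] by simp
  finally show ?thesis using ge by simp
qed


section \<open>Count spaces over countable types\<close>

lemma SUP_SUP_diagonal:
  fixes f :: "nat \<Rightarrow> nat \<Rightarrow> ennreal"
  assumes mono1: "\<And>i i' j. i \<le> i' \<Longrightarrow> f i j \<le> f i' j"
    and mono2: "\<And>i j j'. j \<le> j' \<Longrightarrow> f i j \<le> f i j'"
  shows "(SUP i. SUP j. f i j) = (SUP l. f l l)"
proof (rule antisym)
  show "(SUP i. SUP j. f i j) \<le> (SUP l. f l l)"
  proof (intro SUP_least)
    fix i j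
    have "f i j \<le> f (max i j) (max i j)"
      using mono1[of i "max i j" j] mono2[of j "max i j" "max i j"] by (meson max.cobounded1 max.cobounded2 order_trans)
    also have "\<dots> \<le> (SUP l. f l l)" by (rule SUP_upper) simp
    finally show "f i j \<le> (SUP l. f l l)" .
  qed
  show "(SUP l. f l l) \<le> (SUP i. SUP j. f i j)"
  proof (intro SUP_least)
    fix l
    have "f l l \<le> (SUP j. f l j)" by (rule SUP_upper) simp
    also have "\<dots> \<le> (SUP i. SUP j. f i j)" by (rule SUP_upper[where f="\<lambda>i. SUP j. f i j"]) simp
    finally show "f l l \<le> (SUP i. SUP j. f i j)" .
  qed
qed

lemma le_nn_integral_count_space: "f z \<le> (\<integral>\<^sup>+x. f x \<partial>count_space UNIV)"
proof -
  have "f z = (\<integral>\<^sup>+x. f x * indicator {z} x \<partial>count_space UNIV)"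
    by (subst nn_integral_count_space'[of "{z}"]) auto
  also have "\<dots> \<le> (\<integral>\<^sup>+x. f x \<partial>count_space UNIV)"
    by (intro nn_integral_mono) (auto simp: indicator_def)
  finally show ?thesis .
qed

definition prefix_set :: "nat \<Rightarrow> 'a::countable set" where
  "prefix_set j = {x. to_nat x < j}"

lemma prefix_set_finite: "finite (prefix_set j :: 'a::countable set)"
proof -
  have "(prefix_set j :: 'a set) = to_nat -` {..<j}" unfolding prefix_set_def by auto
  then show ?thesis by (simp add: finite_vimageI)
qed

lemma prefix_set_mono: "i \<le> j \<Longrightarrow> prefix_set i \<subseteq> prefix_set j"
  unfolding prefix_set_def by auto

lemma finite_subset_prefix_set:
  assumes "finite (F :: 'a::countable set)"
  obtains j where "F \<subseteq> prefix_set j"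
proof
  show "F \<subseteq> prefix_set (Suc (Max (to_nat ` F)))"
    using assms unfolding prefix_set_def by (auto simp: less_Suc_eq_le intro!: Max_ge)
qed

lemma nn_integral_count_space_prefix_SUP:
  fixes f :: "'a::countable \<Rightarrow> ennreal"
  shows "(\<integral>\<^sup>+z. f z \<partial>count_space UNIV) = (SUP j. \<Sum>z\<in>prefix_set j. f z)"
proof -
  have pointwise: "f z = (SUP j. f z * indicator (prefix_set j) z)" for z
  proof (rule antisym)
    have "f z = f z * indicator (prefix_set (Suc (to_nat z))) z" unfolding prefix_set_def by simp
    also have "\<dots> \<le> (SUP j. f z * indicator (prefix_set j) z)" by (rule SUP_upper) simp
    finally show "f z \<le> (SUP j. f z * indicator (prefix_set j) z)" .
    show "(SUP j. f z * indicator (prefix_set j) z) \<le> f z"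
      by (intro SUP_least) (auto simp: indicator_def)
  qed
  have inc: "incseq (\<lambda>j z. f z * indicator (prefix_set j) z)"
    unfolding incseq_def le_fun_def
    using prefix_set_mono by (auto simp: indicator_def intro!: mult_left_mono)
  have "(\<integral>\<^sup>+z. f z \<partial>count_space UNIV)
      = (\<integral>\<^sup>+z. (SUP j. f z * indicator (prefix_set j) z) \<partial>count_space UNIV)"
    using pointwise by simp
  also have "\<dots> = (SUP j. \<integral>\<^sup>+z. f z * indicator (prefix_set j) z \<partial>count_space UNIV)"
    using nn_integral_monotone_convergence_SUP[OF inc] by simp
  also have "\<dots> = (SUP j. \<Sum>z\<in>prefix_set j. f z)"
  proof (intro SUP_cong refl)
    fix j
    show "(\<integral>\<^sup>+z. f z * indicator (prefix_set j) z \<partial>count_space UNIV) = (\<Sum>z\<in>prefix_set j. f z)"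
      by (subst nn_integral_count_space'[OF prefix_set_finite[of j]]) auto
  qed
  finally show ?thesis .
qed

section \<open>Branching random walks locally isomorphic to a finite one\<close>

lemma brw_first_moment_finite:
  assumes "is_brw k" shows "first_moment k x y < top"
proof -
  obtain C :: real where "\<And>x. (\<integral>\<^sup>+ y. first_moment k x y \<partial>count_space UNIV) \<le> ennreal C"
    using assms unfolding is_brw_def by blast
  then have "first_moment k x y \<le> ennreal C"
    using le_nn_integral_count_space[of "first_moment k x" y] order_trans by blast
  then show ?thesis using ennreal_less_top[of C] by (rule le_less_trans)
qed

locale fbrw =
  fixes \<mu> :: "'x::countable \<Rightarrow> ('x \<Rightarrow> nat) pmf"
    and g :: "'x \<Rightarrow> 'y::finite"
    and \<nu> :: "'y \<Rightarrow> ('y \<Rightarrow> nat) pmf"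
  assumes brw: "is_brw \<mu>" and brw_finite: "is_brw \<nu>"
    and loc_iso: "locally_isomorphic \<mu> g \<nu>"
    and irreducible: "irreducible_brw \<mu>" and symmetric: "non_oriented \<mu>"
begin

abbreviation "fm \<equiv> first_moment \<mu>"
abbreviation "mp \<equiv> moment_pow \<mu>"

definition m :: "'x \<Rightarrow> 'x \<Rightarrow> real" where
  "m x y = enn2real (fm x y)"

(* Moments are finite, so m represents them exactly; non-orientation makes m symmetric. *)
lemma fm_eq_m: "fm x y = ennreal (m x y)"
  unfolding m_def using brw_first_moment_finite[OF brw] by simp

lemma m_nonneg: "m x y \<ge> 0"
  unfolding m_def by simp

lemma m_sym: "m x y = m y x"
  using symmetric unfolding non_oriented_def m_def by simp

lemma projected_first_moment:
  "first_moment \<nu> (g x) j = (\<integral>\<^sup>+y. indicator {y. g y = j} y * fm x y \<partial>count_space UNIV)"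
proof -
  have nu: "\<nu> (g x) = map_pmf (proj_conf g) (\<mu> x)"
    using loc_iso unfolding locally_isomorphic_def by blast
  have fibre_sum: "ennreal (real (proj_conf g f j))
      = (\<integral>\<^sup>+w. indicator {w. g w = j} w * ennreal (real (f w)) \<partial>count_space UNIV)"
    if "f \<in> set_pmf (\<mu> x)" for f
  proof -
    have "finite {w. f w \<noteq> 0}" using that brw unfolding is_brw_def fin_conf_def by blast
    then have A_fin: "finite {w. g w = j \<and> f w \<noteq> 0}" by (rule rev_finite_subset) auto
    have "(\<integral>\<^sup>+w. indicator {w. g w = j} w * ennreal (real (f w)) \<partial>count_space UNIV)
        = (\<Sum>w\<in>{w. g w = j \<and> f w \<noteq> 0}. indicator {w. g w = j} w * ennreal (real (f w)))"
      by (rule nn_integral_count_space'[OF A_fin]) auto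
    also have "\<dots> = ennreal (real (proj_conf g f j))"
      unfolding proj_conf_def by (simp add: of_nat_sum flip: sum_ennreal)
    finally show ?thesis by simp
  qed
  have "first_moment \<nu> (g x) j = (\<integral>\<^sup>+f. ennreal (real (proj_conf g f j)) \<partial>measure_pmf (\<mu> x))"
    unfolding first_moment_def nu by simp
  also have "\<dots> = (\<integral>\<^sup>+f. (\<integral>\<^sup>+w. indicator {w. g w = j} w * ennreal (real (f w)) \<partial>count_space UNIV)
                      \<partial>measure_pmf (\<mu> x))"
    using fibre_sum by (intro nn_integral_cong_AE) (simp add: AE_measure_pmf_iff)
  also have "\<dots> = (\<integral>\<^sup>+w. (\<integral>\<^sup>+f. indicator {w. g w = j} w * ennreal (real (f w)) \<partial>measure_pmf (\<mu> x))
                      \<partial>count_space UNIV)"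
    by (rule nn_integral_count_space_nn_integral) auto
  also have "\<dots> = (\<integral>\<^sup>+y. indicator {y. g y = j} y * fm x y \<partial>count_space UNIV)"
    unfolding first_moment_def by (intro nn_integral_cong) (simp add: nn_integral_cmult)
  finally show ?thesis .
qed

definition n :: "'y \<Rightarrow> 'y \<Rightarrow> real" where
  "n i j = enn2real (first_moment \<nu> i j)"

lemma n_nonneg: "n i j \<ge> 0"
  unfolding n_def by simp

lemma fm_eq_n: "first_moment \<nu> i j = ennreal (n i j)"
  unfolding n_def using brw_first_moment_finite[OF brw_finite] by simp

lemma n_pos: assumes "fm a b > 0" shows "n (g a) (g b) > 0"
proof -
  have "fm a b = indicator {y. g y = g b} b * fm a b" by simp
  also have "\<dots> \<le> first_moment \<nu> (g a) (g b)"
    unfolding projected_first_moment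
    by (rule le_nn_integral_count_space[of "\<lambda>y. indicator {y. g y = g b} y * fm a y"])
  finally have "fm a b \<le> ennreal (n (g a) (g b))" unfolding fm_eq_n .
  with assms have "0 < ennreal (n (g a) (g b))" by (rule less_le_trans)
  then show ?thesis by simp
qed

(* Irreducibility of mu descends to the finite matrix n, since g is surjective. *)
lemma n_irreducible: "(i, j) \<in> {(a,b). n a b > 0}\<^sup>*"
proof -
  obtain x y where x: "g x = i" and y: "g y = j"
    using loc_iso unfolding locally_isomorphic_def by (metis surjD)
  have "(x, y) \<in> {(a, b). 0 < fm a b}\<^sup>*" using irreducible unfolding irreducible_brw_def by blast
  then have "(g x, g y) \<in> {(a,b). n a b > 0}\<^sup>*"
  proof (induction rule: rtrancl_induct)
    case (step b c)
    then show ?case using n_pos by (simp add: rtrancl.rtrancl_into_rtrancl)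
  qed simp
  then show ?thesis using x y by simp
qed

lemma mp_add: "mp (p + q) x y = (\<integral>\<^sup>+z. mp p x z * mp q z y \<partial>count_space UNIV)"
proof (induction p arbitrary: x)
  case 0
  show ?case by (subst nn_integral_count_space'[of "{x}"]) auto
next
  case (Suc p)
  have "mp (Suc p + q) x y
      = (\<integral>\<^sup>+a. \<integral>\<^sup>+z. fm x a * mp p a z * mp q z y \<partial>count_space UNIV \<partial>count_space UNIV)"
    by (simp add: Suc.IH nn_integral_cmult mult.assoc)
  also have "\<dots> = (\<integral>\<^sup>+z. \<integral>\<^sup>+a. fm x a * mp p a z * mp q z y \<partial>count_space UNIV \<partial>count_space UNIV)"
    by (rule nn_integral_count_space_nn_integral) auto
  also have "\<dots> = (\<integral>\<^sup>+z. mp (Suc p) x z * mp q z y \<partial>count_space UNIV)"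
    by (simp add: nn_integral_multc)
  finally show ?case .
qed

lemma mp_mult_le: "mp p x z * mp q z y \<le> mp (p + q) x y"
  unfolding mp_add by (rule le_nn_integral_count_space[of "\<lambda>z. mp p x z * mp q z y"])

lemma mp_one: "mp (Suc 0) x y = fm x y"
  by (subst moment_pow.simps, subst nn_integral_count_space'[of "{y}"]) auto

lemma mp_pos: "\<exists>k. mp k a b > 0"
proof -
  have "(a, b) \<in> {(a, b). 0 < fm a b}\<^sup>*" using irreducible unfolding irreducible_brw_def by blast
  then show ?thesis
  proof (induction rule: rtrancl_induct)
    case base then show ?case by (intro exI[of _ 0]) simp
  next
    case (step b c)
    then obtain k where k: "mp k a b > 0" by blast
    have "0 < mp k a b * mp (Suc 0) b c"
      unfolding mp_one using k step(2) by (simp add: ennreal_zero_less_mult_iff)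
    also have "\<dots> \<le> mp (k + Suc 0) a c" by (rule mp_mult_le)
    finally show ?case by blast
  qed
qed

lemma mp_eq_SUP_trunc_pow: "mp k x y = (SUP j. ennreal (trunc_pow m (prefix_set j) k x y))"
proof (induction k arbitrary: x)
  case (Suc k)
  define f where "f i j = (\<Sum>z\<in>prefix_set j. fm x z * ennreal (trunc_pow m (prefix_set i) k z y))" for i j
  have trunc_mono: "trunc_pow m (prefix_set i) k z y \<le> trunc_pow m (prefix_set i') k z y"
    if "i \<le> i'" for i i' z
    by (rule trunc_pow_mono[OF m_nonneg prefix_set_mono[OF that] prefix_set_finite])
  have inc: "incseq (\<lambda>i z. fm x z * ennreal (trunc_pow m (prefix_set i) k z y))"
    unfolding incseq_def le_fun_def using trunc_mono by (auto intro!: mult_left_mono ennreal_leI)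
  have "mp (Suc k) x y
      = (\<integral>\<^sup>+z. (SUP i. fm x z * ennreal (trunc_pow m (prefix_set i) k z y)) \<partial>count_space UNIV)"
    by (simp add: Suc.IH SUP_mult_left_ennreal)
  also have "\<dots> = (SUP i. \<integral>\<^sup>+z. fm x z * ennreal (trunc_pow m (prefix_set i) k z y) \<partial>count_space UNIV)"
    using nn_integral_monotone_convergence_SUP[OF inc] by simp
  also have "\<dots> = (SUP i. SUP j. f i j)" unfolding f_def nn_integral_count_space_prefix_SUP ..
  also have "\<dots> = (SUP l. f l l)"
  proof (rule SUP_SUP_diagonal)
    fix i i' j :: nat assume "i \<le> i'"
    then show "f i j \<le> f i' j" unfolding f_def using trunc_mono
      by (intro sum_mono mult_left_mono ennreal_leI) auto
  next
    fix i j j' :: nat assume "j \<le> j'"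
    then show "f i j \<le> f i j'" unfolding f_def using prefix_set_mono prefix_set_finite
      by (intro sum_mono2) auto
  qed
  also have "\<dots> = (SUP l. ennreal (trunc_pow m (prefix_set l) (Suc k) x y))"
  proof (intro SUP_cong refl)
    fix l
    have "f l l = (\<Sum>z\<in>prefix_set l. ennreal (m x z * trunc_pow m (prefix_set l) k z y))"
      unfolding f_def fm_eq_m using m_nonneg trunc_pow_nonneg[of m, OF m_nonneg]
      by (intro sum.cong refl) (simp add: ennreal_mult m_nonneg)
    also have "\<dots> = ennreal (trunc_pow m (prefix_set l) (Suc k) x y)"
      using m_nonneg trunc_pow_nonneg[of m, OF m_nonneg] by (subst sum_ennreal) auto
    finally show "f l l = ennreal (trunc_pow m (prefix_set l) (Suc k) x y)" .
  qed
  finally show ?case .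
qed simp

lemma trunc_pow_le_mp:
  assumes "finite F" shows "ennreal (trunc_pow m F k x y) \<le> mp k x y"
proof -
  obtain j where "F \<subseteq> prefix_set j" using finite_subset_prefix_set[OF assms] .
  then have "trunc_pow m F k x y \<le> trunc_pow m (prefix_set j) k x y"
    by (rule trunc_pow_mono[OF m_nonneg _ prefix_set_finite])
  then have "ennreal (trunc_pow m F k x y) \<le> ennreal (trunc_pow m (prefix_set j) k x y)"
    by (rule ennreal_leI)
  also have "\<dots> \<le> mp k x y" unfolding mp_eq_SUP_trunc_pow[of k x y] by (rule SUP_upper) simp
  finally show ?thesis .
qed

(* Expected number of children of a particle at x that leave S, and the total
   such flow out of S; nonamenability says boundary S / |S| is bounded below. *)
definition exit_mass :: "'x set \<Rightarrow> 'x \<Rightarrow> ennreal" where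
  "exit_mass S x = (\<integral>\<^sup>+y. indicator (- S) y * fm x y \<partial>count_space UNIV)"

definition boundary :: "'x set \<Rightarrow> ennreal" where
  "boundary S = (\<Sum>x\<in>S. exit_mass S x)"

(* Exit masses and boundaries are finite, so their real parts carry all information. *)
lemma exit_mass_finite: "exit_mass S x < top"
proof -
  obtain C :: real where C: "\<And>x. (\<integral>\<^sup>+ y. fm x y \<partial>count_space UNIV) \<le> ennreal C"
    using brw unfolding is_brw_def by blast
  have "exit_mass S x \<le> (\<integral>\<^sup>+ y. fm x y \<partial>count_space UNIV)" unfolding exit_mass_def
    by (intro nn_integral_mono) (auto simp: indicator_def)
  also have "\<dots> \<le> ennreal C" by (rule C)
  finally show ?thesis using ennreal_less_top[of C] by (rule le_less_trans)
qed

lemma boundary_finite: "boundary S < top"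
  unfolding boundary_def using exit_mass_finite by (cases "finite S") auto

lemma boundary_real: "enn2real (boundary S) = (\<Sum>x\<in>S. enn2real (exit_mass S x))"
  unfolding boundary_def using exit_mass_finite by (subst enn2real_sum) auto

lemma nonamenable_iff_boundary:
  "nonamenable \<mu> \<longleftrightarrow> 0 < (INF S\<in>{S. finite S \<and> S \<noteq> {}}. boundary S / of_nat (card S))"
  unfolding nonamenable_def boundary_def exit_mass_def ..

lemma isoperimetric_constant:
  assumes "nonamenable \<mu>"
  obtains \<kappa> where "\<kappa> > 0" "\<And>S. finite S \<Longrightarrow> \<kappa> * real (card S) \<le> enn2real (boundary S)"
proof -
  define D where "D = (INF S\<in>{S. finite S \<and> S \<noteq> {}}. boundary S / of_nat (card S))"
  have D_pos: "0 < D" using assms unfolding nonamenable_iff_boundary D_def .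
  define \<kappa> where "\<kappa> = enn2real (min D 1)"
  have min_fin: "min D 1 < top" by (simp add: min_less_iff_disj)
  have \<kappa>_eq: "ennreal \<kappa> = min D 1" unfolding \<kappa>_def using min_fin by simp
  have \<kappa>_pos: "\<kappa> > 0" unfolding \<kappa>_def using D_pos min_fin by (simp add: enn2real_positive_iff)
  show ?thesis
  proof (rule that[OF \<kappa>_pos])
    fix S :: "'x set" assume S: "finite S"
    show "\<kappa> * real (card S) \<le> enn2real (boundary S)"
    proof (cases "S = {}")
      case False
      have "D \<le> boundary S / of_nat (card S)"
        unfolding D_def using S False by (intro INF_lower) auto
      then have le: "ennreal \<kappa> \<le> boundary S / of_nat (card S)"
        unfolding \<kappa>_eq by (simp add: min.coboundedI1)
      have card_nonzero: "of_nat (card S) \<noteq> (0::ennreal)" using S False by simp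
      have "ennreal \<kappa> * of_nat (card S) \<le> boundary S"
      proof (rule ccontr)
        assume "\<not> ennreal \<kappa> * of_nat (card S) \<le> boundary S"
        then have "boundary S / of_nat (card S) < ennreal \<kappa>"
          using card_nonzero by (subst divide_less_ennreal) (auto simp: of_nat_less_top)
        then show False using le by simp
      qed
      then have "ennreal (\<kappa> * real (card S)) \<le> ennreal (enn2real (boundary S))"
        using boundary_finite[of S] \<kappa>_pos by (simp add: ennreal_mult ennreal_of_nat_eq_real_of_nat)
      then show ?thesis by (subst (asm) ennreal_le_iff) auto
    qed simp
  qed
qed

lemma folner_set:
  assumes "\<not> nonamenable \<mu>" and \<epsilon>: "\<epsilon> > 0"
  obtains S where "finite S" "S \<noteq> {}" "enn2real (boundary S) < \<epsilon> * real (card S)"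
proof -
  have "(INF S\<in>{S. finite S \<and> S \<noteq> {}}. boundary S / of_nat (card S)) < ennreal \<epsilon>"
    using assms unfolding nonamenable_iff_boundary by (simp add: not_less)
  then obtain S where S: "finite S" "S \<noteq> {}" and lt: "boundary S / of_nat (card S) < ennreal \<epsilon>"
    unfolding INF_less_iff by auto
  have "of_nat (card S) \<noteq> (0::ennreal)" using S by simp
  then have "boundary S < ennreal \<epsilon> * of_nat (card S)"
    using lt by (subst (asm) divide_less_ennreal) (auto simp: of_nat_less_top)
  also have "\<dots> = ennreal (\<epsilon> * real (card S))"
    using \<epsilon> by (simp add: ennreal_mult ennreal_of_nat_eq_real_of_nat)
  finally have "enn2real (boundary S) < \<epsilon> * real (card S)"
    using boundary_finite[of S] \<epsilon> S by (simp add: enn2real_less_iff)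
  then show ?thesis using that S by blast
qed

end


locale fbrw_pf = fbrw \<mu> g \<nu> for \<mu> :: "'x::countable \<Rightarrow> ('x \<Rightarrow> nat) pmf"
    and g :: "'x \<Rightarrow> 'y::finite" and \<nu> :: "'y \<Rightarrow> ('y \<Rightarrow> nat) pmf" +
  fixes rho :: real and w :: "'y \<Rightarrow> real"
  assumes rho_nonneg: "rho \<ge> 0" and w_pos: "\<And>i. w i > 0"
    and eigen: "\<And>i. (\<Sum>j\<in>UNIV. n i j * w j) = rho * w i"
begin

(* The lifted weight W = w o g, bounded between wmin > 0 and wmax since Y is finite. *)
definition W :: "'x \<Rightarrow> real" where "W x = w (g x)"
definition wmin :: real where "wmin = Min (range w)"
definition wmax :: real where "wmax = Max (range w)"

lemma W_pos: "W x > 0"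
  using w_pos unfolding W_def by simp

lemma W_bounds: "wmin > 0" "wmin \<le> W x" "W x \<le> wmax" "wmax > 0"
proof -
  have "wmin \<in> range w" unfolding wmin_def by (rule Min_in) auto
  then show "wmin > 0" using w_pos by auto
  show "wmin \<le> W x" unfolding wmin_def W_def by simp
  show "W x \<le> wmax" unfolding wmax_def W_def by simp
  then show "wmax > 0" using W_pos[of x] by simp
qed

lemma weighted_row: "(\<integral>\<^sup>+y. fm x y * ennreal (W y) \<partial>count_space UNIV) = ennreal (rho * W x)"
proof -
  have "(\<integral>\<^sup>+y. fm x y * ennreal (W y) \<partial>count_space UNIV)
      = (\<integral>\<^sup>+y. (\<Sum>j\<in>UNIV. ennreal (w j) * (indicator {y. g y = j} y * fm x y)) \<partial>count_space UNIV)"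
  proof (intro nn_integral_cong)
    fix y
    have "(\<Sum>j\<in>UNIV. ennreal (w j) * (indicator {y. g y = j} y * fm x y))
        = (\<Sum>j\<in>{g y}. ennreal (w j) * (indicator {y. g y = j} y * fm x y))"
      by (intro sum.mono_neutral_right) auto
    then show "fm x y * ennreal (W y) = (\<Sum>j\<in>UNIV. ennreal (w j) * (indicator {y. g y = j} y * fm x y))"
      unfolding W_def by (simp add: mult.commute)
  qed
  also have "\<dots> = (\<Sum>j\<in>UNIV. ennreal (w j) * first_moment \<nu> (g x) j)"
    by (subst nn_integral_sum) (auto simp: nn_integral_cmult projected_first_moment)
  also have "\<dots> = (\<Sum>j\<in>UNIV. ennreal (n (g x) j * w j))"
    using w_pos n_nonneg by (intro sum.cong refl) (simp add: fm_eq_n ennreal_mult mult.commute less_imp_le)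
  also have "\<dots> = ennreal (\<Sum>j\<in>UNIV. n (g x) j * w j)"
    using w_pos n_nonneg by (intro sum_ennreal) (simp add: less_imp_le)
  also have "\<dots> = ennreal (rho * W x)" unfolding eigen W_def ..
  finally show ?thesis .
qed

lemma weighted_moment_pow:
  "(\<integral>\<^sup>+y. mp k x y * ennreal (W y) \<partial>count_space UNIV) = ennreal (rho^k * W x)"
proof (induction k arbitrary: x)
  case 0
  show ?case by (subst nn_integral_count_space'[of "{x}"]) auto
next
  case (Suc k)
  have "(\<integral>\<^sup>+y. mp (Suc k) x y * ennreal (W y) \<partial>count_space UNIV)
      = (\<integral>\<^sup>+y. \<integral>\<^sup>+z. fm x z * mp k z y * ennreal (W y) \<partial>count_space UNIV \<partial>count_space UNIV)"
    by (simp add: nn_integral_multc)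
  also have "\<dots> = (\<integral>\<^sup>+z. \<integral>\<^sup>+y. fm x z * (mp k z y * ennreal (W y)) \<partial>count_space UNIV \<partial>count_space UNIV)"
    by (subst nn_integral_count_space_nn_integral) (auto simp: mult.assoc)
  also have "\<dots> = (\<integral>\<^sup>+z. (fm x z * ennreal (W z)) * ennreal (rho^k) \<partial>count_space UNIV)"
    using rho_nonneg W_pos
    by (intro nn_integral_cong) (simp add: nn_integral_cmult Suc.IH ennreal_mult mult_ac less_imp_le)
  also have "\<dots> = ennreal (rho * W x) * ennreal (rho^k)"
    by (simp add: nn_integral_multc weighted_row)
  also have "\<dots> = ennreal (rho^Suc k * W x)"
    using rho_nonneg W_pos[of x] by (simp add: ennreal_mult[symmetric] mult_ac)
  finally show ?case .
qed

lemma mp_finite: "mp k x y < top"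
proof -
  have "mp k x y * ennreal (W y) \<le> ennreal (rho^k * W x)"
    using le_nn_integral_count_space[of "\<lambda>y. mp k x y * ennreal (W y)" y] weighted_moment_pow by simp
  then have "mp k x y * ennreal (W y) < top" using ennreal_less_top le_less_trans by blast
  then show ?thesis using W_pos[of y] by (auto simp: ennreal_mult_less_top)
qed

lemma row_sum_bounds:
  "(W x / wmax) * rho^k \<le> enn2real (\<integral>\<^sup>+y. mp k x y \<partial>count_space UNIV)"
  "enn2real (\<integral>\<^sup>+y. mp k x y \<partial>count_space UNIV) \<le> (W x / wmin) * rho^k"
proof -
  define R where "R = (\<integral>\<^sup>+y. mp k x y \<partial>count_space UNIV)"
  have scaled: "ennreal c * R = (\<integral>\<^sup>+y. mp k x y * ennreal c \<partial>count_space UNIV)" for c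
    unfolding R_def by (subst nn_integral_multc) (auto simp: mult.commute)
  have upper: "ennreal wmin * R \<le> ennreal (rho^k * W x)"
    unfolding scaled weighted_moment_pow[symmetric] using W_bounds
    by (intro nn_integral_mono mult_left_mono) (auto intro: ennreal_leI)
  have lower: "ennreal (rho^k * W x) \<le> ennreal wmax * R"
    unfolding scaled weighted_moment_pow[symmetric] using W_bounds
    by (intro nn_integral_mono mult_left_mono) auto
  have "ennreal wmin * R < top"
    using upper ennreal_less_top[of "rho^k * W x"] by (rule le_less_trans)
  then have "R = ennreal (enn2real R)" using W_bounds(1) by (auto simp: ennreal_mult_less_top)
  then obtain t where R: "R = ennreal t" and t: "t \<ge> 0" "enn2real R = t" by simp
  have prod_nonneg: "rho^k * W x \<ge> 0" using rho_nonneg W_pos[of x] by simp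
  have "wmin * t \<le> rho^k * W x"
    using upper unfolding R using W_bounds(1) t prod_nonneg by (simp add: ennreal_mult[symmetric])
  moreover have "rho^k * W x \<le> wmax * t"
    using lower unfolding R using W_bounds(4) t by (simp add: ennreal_mult[symmetric])
  ultimately have upper: "wmin * enn2real R \<le> rho^k * W x" and lower: "rho^k * W x \<le> wmax * enn2real R"
    using t by auto
  show "(W x / wmax) * rho^k \<le> enn2real R" using lower W_bounds(4) by (simp add: field_simps)
  show "enn2real R \<le> (W x / wmin) * rho^k" using upper W_bounds(1) by (simp add: field_simps)
qed

lemma M_w_eq_rho: "M_w \<mu> x = ereal rho"
  unfolding M_w_def
  by (rule liminf_root_sandwich[OF _ _ rho_nonneg row_sum_bounds])
     (use W_pos W_bounds in auto)

definition weighted_exit :: "'x set \<Rightarrow> 'x \<Rightarrow> real" where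
  "weighted_exit S x = enn2real (\<integral>\<^sup>+y. indicator (- S) y * fm x y * ennreal (W y) \<partial>count_space UNIV)"

lemma weighted_exit_nonneg: "weighted_exit S x \<ge> 0"
  unfolding weighted_exit_def by simp

lemma eigen_split:
  assumes S: "finite S"
  shows "rho * W x = (\<Sum>y\<in>S. m x y * W y) + weighted_exit S x"
proof -
  define E where "E = (\<integral>\<^sup>+y. indicator (- S) y * fm x y * ennreal (W y) \<partial>count_space UNIV)"
  have inner_nonneg: "0 \<le> (\<Sum>y\<in>S. m x y * W y)"
    using W_pos m_nonneg by (intro sum_nonneg) (simp add: less_imp_le)
  have "ennreal (rho * W x)
      = (\<integral>\<^sup>+y. indicator S y * (fm x y * ennreal (W y)) + indicator (- S) y * fm x y * ennreal (W y)
           \<partial>count_space UNIV)"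
    unfolding weighted_row[symmetric] by (intro nn_integral_cong) (auto simp: indicator_def)
  also have "\<dots> = (\<integral>\<^sup>+y. indicator S y * (fm x y * ennreal (W y)) \<partial>count_space UNIV) + E"
    unfolding E_def by (rule nn_integral_add) auto
  also have "(\<integral>\<^sup>+y. indicator S y * (fm x y * ennreal (W y)) \<partial>count_space UNIV)
      = (\<Sum>y\<in>S. ennreal (m x y * W y))"
    using W_pos m_nonneg
    by (subst nn_integral_count_space'[OF S]) (auto simp: fm_eq_m ennreal_mult less_imp_le intro!: sum.cong)
  also have "\<dots> = ennreal (\<Sum>y\<in>S. m x y * W y)"
    using W_pos m_nonneg by (intro sum_ennreal) (simp add: less_imp_le)
  finally have split: "ennreal (rho * W x) = ennreal (\<Sum>y\<in>S. m x y * W y) + E" .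
  then have "E \<le> ennreal (rho * W x)" by simp
  then have "E < top" using ennreal_less_top[of "rho * W x"] by (rule le_less_trans)
  then show ?thesis
    using arg_cong[OF split, of enn2real] inner_nonneg rho_nonneg W_pos[of x]
    unfolding weighted_exit_def E_def[symmetric] by (simp add: enn2real_plus)
qed

lemma weighted_exit_bounds:
  assumes "finite S"
  shows "wmin * enn2real (exit_mass S x) \<le> weighted_exit S x"
    "weighted_exit S x \<le> wmax * enn2real (exit_mass S x)"
proof -
  define E where "E = (\<integral>\<^sup>+y. indicator (- S) y * fm x y * ennreal (W y) \<partial>count_space UNIV)"
  have scaled: "ennreal c * exit_mass S x = (\<integral>\<^sup>+y. indicator (- S) y * fm x y * ennreal c \<partial>count_space UNIV)"
    for c unfolding exit_mass_def by (subst nn_integral_multc) (auto simp: mult.commute)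
  have "E \<le> ennreal (rho * W x)"
    using eigen_split[OF assms, of x] weighted_row[of x] unfolding E_def weighted_row[symmetric]
    by (intro nn_integral_mono) (auto simp: indicator_def)
  then have E_fin: "E < top" using ennreal_less_top le_less_trans by blast
  have "ennreal wmin * exit_mass S x \<le> E"
    unfolding scaled E_def using W_bounds by (intro nn_integral_mono mult_left_mono) (auto intro: ennreal_leI)
  then have "enn2real (ennreal wmin * exit_mass S x) \<le> enn2real E"
    using E_fin by (rule enn2real_mono)
  then show "wmin * enn2real (exit_mass S x) \<le> weighted_exit S x"
    unfolding weighted_exit_def E_def[symmetric] using W_bounds(1) by (simp add: enn2real_mult)
  have "E \<le> ennreal wmax * exit_mass S x"
    unfolding scaled E_def using W_bounds by (intro nn_integral_mono mult_left_mono) (auto intro: ennreal_leI)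
  then have "enn2real E \<le> enn2real (ennreal wmax * exit_mass S x)"
    using exit_mass_finite by (intro enn2real_mono) (auto simp: ennreal_mult_less_top)
  then show "weighted_exit S x \<le> wmax * enn2real (exit_mass S x)"
    unfolding weighted_exit_def E_def[symmetric] using W_bounds(4) by (simp add: enn2real_mult)
qed

end


context fbrw_pf
begin

section \<open>Nonamenable implies M_s < rho\<close>

(* Isoperimetry transfers to the weighted matrix W x m x y W y with masses W x^2: its
   boundary term on S is the W-weighted exit flow, at least wmin^2 times boundary S. *)
lemma weighted_isoperimetric:
  assumes \<kappa>: "\<kappa> > 0"
    and isoperimetric: "\<And>S. finite S \<Longrightarrow> \<kappa> * real (card S) \<le> enn2real (boundary S)"
    and S: "finite S"
  shows "(wmin\<^sup>2 * \<kappa> / wmax\<^sup>2) * (\<Sum>x\<in>S. (W x)\<^sup>2)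
       \<le> (\<Sum>x\<in>S. rho * (W x)\<^sup>2 - (\<Sum>y\<in>S. W x * m x y * W y))"
proof -
  have exit_term: "rho * (W x)\<^sup>2 - (\<Sum>y\<in>S. W x * m x y * W y) = W x * weighted_exit S x" for x
  proof -
    have "rho * (W x)\<^sup>2 - (\<Sum>y\<in>S. W x * m x y * W y) = W x * (rho * W x - (\<Sum>y\<in>S. m x y * W y))"
      by (simp add: sum_distrib_left power2_eq_square algebra_simps)
    then show ?thesis using eigen_split[OF S, of x] by simp
  qed
  have "(wmin\<^sup>2 * \<kappa> / wmax\<^sup>2) * (\<Sum>x\<in>S. (W x)\<^sup>2) \<le> (wmin\<^sup>2 * \<kappa> / wmax\<^sup>2) * (\<Sum>x\<in>S. wmax\<^sup>2)"
    using \<kappa> W_bounds W_pos by (intro mult_left_mono sum_mono power_mono) (auto simp: less_imp_le)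
  also have "\<dots> = wmin\<^sup>2 * (\<kappa> * real (card S))"
    using W_bounds(4) by (simp add: field_simps)
  also have "\<dots> \<le> wmin\<^sup>2 * enn2real (boundary S)" using isoperimetric[OF S] by (intro mult_left_mono) auto
  also have "\<dots> = (\<Sum>x\<in>S. wmin * (wmin * enn2real (exit_mass S x)))"
    unfolding boundary_real by (simp add: sum_distrib_left power2_eq_square mult.assoc)
  also have "\<dots> \<le> (\<Sum>x\<in>S. W x * weighted_exit S x)"
    using weighted_exit_bounds(1)[OF S] W_bounds(1,2) weighted_exit_nonneg W_pos[THEN less_imp_le]
    by (intro sum_mono mult_mono) (auto simp: mult_nonneg_nonneg)
  finally show ?thesis unfolding exit_term .
qed

(* A positive isoperimetric constant forces rho > 0 (test the singletons). *)
lemma rho_pos: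
  assumes "nonamenable \<mu>"
  shows "rho > 0"
proof -
  obtain \<kappa> where \<kappa>: "\<kappa> > 0"
    and isoperimetric: "\<And>S. finite S \<Longrightarrow> \<kappa> * real (card S) \<le> enn2real (boundary S)"
    using isoperimetric_constant[OF assms] by blast
  fix x0 :: 'x
  have "0 < (wmin\<^sup>2 * \<kappa> / wmax\<^sup>2) * (W x0)\<^sup>2"
    using \<kappa> W_bounds W_pos[of x0] by simp
  also have "\<dots> \<le> rho * (W x0)\<^sup>2 - W x0 * m x0 x0 * W x0"
    using weighted_isoperimetric[OF \<kappa> isoperimetric, of "{x0}"] by simp
  also have "\<dots> \<le> rho * (W x0)\<^sup>2"
    using m_nonneg[of x0 x0] W_pos[of x0] by simp
  finally show ?thesis using W_pos[of x0] by (simp add: zero_less_mult_iff)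
qed

(* Spectral gap: for a nonamenable BRW the quadratic form of m on nonnegative vectors is
   bounded by some \<theta> < rho, by the Cheeger inequality for the W-weighted matrix. *)
lemma quad_form_gap:
  assumes na: "nonamenable \<mu>"
  obtains \<theta> where "0 \<le> \<theta>" "\<theta> < rho"
    "\<And>F u. finite F \<Longrightarrow> (\<And>x. x \<in> F \<Longrightarrow> u x \<ge> 0) \<Longrightarrow> quad_form F m u \<le> \<theta> * sq_norm F u"
proof -
  obtain \<kappa> where \<kappa>: "\<kappa> > 0"
    and isoperimetric: "\<And>S. finite S \<Longrightarrow> \<kappa> * real (card S) \<le> enn2real (boundary S)"
    using isoperimetric_constant[OF na] by blast
  have rho: "rho > 0" by (rule rho_pos[OF na])
  define \<kappa>' where "\<kappa>' = wmin\<^sup>2 * \<kappa> / wmax\<^sup>2"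
  have \<kappa>': "\<kappa>' > 0" unfolding \<kappa>'_def using \<kappa> W_bounds by simp
  define \<theta> where "\<theta> = max (rho - \<kappa>'\<^sup>2 / (8 * rho)) 0"
  show ?thesis
  proof (rule that[of \<theta>])
    show "0 \<le> \<theta>" "\<theta> < rho" unfolding \<theta>_def using rho \<kappa>' by auto
    fix F :: "'x set" and u :: "'x \<Rightarrow> real"
    assume F: "finite F" and u_nonneg: "\<And>x. x \<in> F \<Longrightarrow> u x \<ge> 0"
    define b where "b x y = W x * m x y * W y" for x y
    define p where "p x = (W x)\<^sup>2" for x
    define f where "f x = u x / W x" for x
    have b_sym: "b x y = b y x" for x y unfolding b_def using m_sym by simp
    have b_nonneg: "b x y \<ge> 0" for x y unfolding b_def using m_nonneg W_pos by (simp add: less_imp_le)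
    have iso: "(\<Sum>x\<in>S. rho * p x - (\<Sum>y\<in>S. b x y)) \<ge> \<kappa>' * (\<Sum>x\<in>S. p x)" if "finite S" for S
      using weighted_isoperimetric[OF \<kappa> isoperimetric that] unfolding \<kappa>'_def p_def b_def .
    have row_le: "(\<Sum>y\<in>F. b x y) \<le> rho * p x" for x
    proof -
      have "W x * weighted_exit F x \<ge> 0"
        using W_pos[of x] weighted_exit_nonneg[of F x] by simp
      moreover have "(\<Sum>y\<in>F. b x y) = W x * (rho * W x - weighted_exit F x)"
        unfolding b_def using eigen_split[OF F, of x] by (simp add: sum_distrib_left mult.assoc)
      ultimately show ?thesis unfolding p_def by (simp add: power2_eq_square algebra_simps)
    qed
    have W_nonzero: "W x \<noteq> 0" for x using W_pos[of x] by simp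
    have "quad_form F m u = quad_form F b f"
      unfolding quad_form_def b_def f_def by (intro sum.cong refl) (simp add: field_simps W_nonzero)
    also have "\<dots> \<le> (rho - \<kappa>'\<^sup>2 / (8 * rho)) * (\<Sum>x\<in>F. p x * (f x)\<^sup>2)"
      using u_nonneg W_pos
      by (intro cheeger_inequality[where b=b and p=p and F=F, OF F rho \<kappa>' b_sym b_nonneg row_le iso])
        (auto simp: f_def intro!: divide_nonneg_pos)
    also have "(\<Sum>x\<in>F. p x * (f x)\<^sup>2) = sq_norm F u"
      unfolding sq_norm_def p_def f_def by (intro sum.cong refl) (simp add: field_simps W_nonzero)
    also have "(rho - \<kappa>'\<^sup>2 / (8 * rho)) * sq_norm F u \<le> \<theta> * sq_norm F u"
      unfolding \<theta>_def by (intro mult_right_mono sq_norm_nonneg) simp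
    finally show "quad_form F m u \<le> \<theta> * sq_norm F u" .
  qed
qed

lemma mp_le_power:
  assumes \<theta>: "0 \<le> \<theta>"
    and form_bound: "\<And>F u. finite F \<Longrightarrow> (\<And>x. x \<in> F \<Longrightarrow> u x \<ge> 0) \<Longrightarrow> quad_form F m u \<le> \<theta> * sq_norm F u"
  shows "enn2real (mp k x y) \<le> \<theta>^k"
proof -
  have "mp k x y \<le> ennreal (\<theta>^k)"
    unfolding mp_eq_SUP_trunc_pow
  proof (intro SUP_least)
    fix j
    define j' where "j' = max j (Suc (to_nat x))"
    have "trunc_pow m (prefix_set j) k x y \<le> trunc_pow m (prefix_set j') k x y"
      unfolding j'_def by (rule trunc_pow_mono[OF m_nonneg prefix_set_mono prefix_set_finite]) simp
    also have "\<dots> \<le> \<theta>^k"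
      using trunc_pow_le_power[where a=m, OF prefix_set_finite _ m_sym m_nonneg \<theta> form_bound[OF prefix_set_finite]]
      unfolding j'_def prefix_set_def by simp
    finally show "ennreal (trunc_pow m (prefix_set j) k x y) \<le> ennreal (\<theta>^k)" by (rule ennreal_leI)
  qed
  then show ?thesis using \<theta> by (intro enn2real_leI) auto
qed

lemma M_s_lt_rho:
  assumes "nonamenable \<mu>"
  shows "M_s \<mu> x y < ereal rho"
proof -
  obtain \<theta> where \<theta>: "0 \<le> \<theta>" "\<theta> < rho"
    and form_bound: "\<And>F u. finite F \<Longrightarrow> (\<And>x. x \<in> F \<Longrightarrow> u x \<ge> 0) \<Longrightarrow> quad_form F m u \<le> \<theta> * sq_norm F u"
    using quad_form_gap[OF assms] by blast
  have "M_s \<mu> x y \<le> ereal \<theta>"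
    unfolding M_s_def
  proof (intro Limsup_bounded always_eventually allI)
    fix k
    show "ereal (root k (enn2real (mp k x y))) \<le> ereal \<theta>"
    proof (cases "k = 0")
      case False
      then have "root k (enn2real (mp k x y)) \<le> root k (\<theta>^k)"
        using mp_le_power[OF \<theta>(1) form_bound] by (intro real_root_le_mono) auto
      also have "\<dots> = \<theta>" using False \<theta> by (simp add: real_root_power_cancel)
      finally show ?thesis by simp
    qed (use \<theta> in simp)
  qed
  also have "\<dots> < ereal rho" using \<theta> by simp
  finally show ?thesis .
qed

section \<open>Amenable implies M_s \<ge> rho\<close>

(* On a Folner set S the eigenfunction W almost satisfies M W = rho W inside S, so the
   quadratic form of m at W exceeds r |W|^2 for any prescribed r < rho. *)
lemma folner_quad_form:
  assumes am: "\<not> nonamenable \<mu>" and r: "r < rho"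
  obtains S where "finite S" "S \<noteq> {}" "quad_form S m W \<ge> r * sq_norm S W"
proof -
  define \<epsilon> where "\<epsilon> = (rho - r) * wmin\<^sup>2 / wmax\<^sup>2"
  have \<epsilon>: "\<epsilon> > 0" unfolding \<epsilon>_def using r W_bounds by simp
  obtain S where S: "finite S" "S \<noteq> {}" and small: "enn2real (boundary S) < \<epsilon> * real (card S)"
    using folner_set[OF am \<epsilon>] by blast
  have form_eq: "quad_form S m W = rho * sq_norm S W - (\<Sum>x\<in>S. W x * weighted_exit S x)"
  proof -
    have "quad_form S m W = (\<Sum>x\<in>S. W x * (rho * W x - weighted_exit S x))"
      unfolding quad_form_def
      by (intro sum.cong refl) (simp add: eigen_split[OF S(1)] sum_distrib_left mult_ac)
    then show ?thesis
      unfolding sq_norm_def by (simp add: algebra_simps sum_subtractf sum_distrib_left power2_eq_square)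
  qed
  have "(\<Sum>x\<in>S. W x * weighted_exit S x) \<le> (\<Sum>x\<in>S. wmax * (wmax * enn2real (exit_mass S x)))"
    using weighted_exit_bounds[OF S(1)] W_bounds W_pos weighted_exit_nonneg
    by (intro sum_mono mult_mono) (auto simp: less_imp_le)
  also have "\<dots> = wmax\<^sup>2 * enn2real (boundary S)"
    unfolding boundary_real by (simp add: sum_distrib_left power2_eq_square mult.assoc)
  also have "\<dots> \<le> wmax\<^sup>2 * (\<epsilon> * real (card S))" using small by (intro mult_left_mono) auto
  also have "\<dots> = (rho - r) * (real (card S) * wmin\<^sup>2)"
    unfolding \<epsilon>_def using W_bounds by (simp add: field_simps)
  also have "\<dots> \<le> (rho - r) * sq_norm S W"
  proof -
    have "real (card S) * wmin\<^sup>2 = (\<Sum>x\<in>S. wmin\<^sup>2)" by simp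
    also have "\<dots> \<le> sq_norm S W"
      unfolding sq_norm_def using W_bounds by (intro sum_mono power_mono) (auto simp: less_imp_le)
    finally show ?thesis using r by (intro mult_left_mono) auto
  qed
  finally have "r * sq_norm S W \<le> quad_form S m W"
    unfolding form_eq by (simp add: algebra_simps)
  then show ?thesis using that S by blast
qed

lemma connecting_paths:
  assumes S: "finite S" "S \<noteq> {}"
  obtains \<delta> L where "\<delta> > 0"
    "\<And>a b k. a \<in> S \<Longrightarrow> b \<in> S \<Longrightarrow> \<exists>d\<le>L. \<delta> * enn2real (mp k a b) \<le> enn2real (mp (k + d) x y)"
proof -
  define pa where "pa a = (SOME p. mp p x a > 0)" for a
  define qb where "qb b = (SOME q. mp q b y > 0)" for b
  have pa: "mp (pa a) x a > 0" for a unfolding pa_def by (rule someI_ex[OF mp_pos])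
  have qb: "mp (qb b) b y > 0" for b unfolding qb_def by (rule someI_ex[OF mp_pos])
  have real_pos: "enn2real (mp k a b) > 0" if "mp k a b > 0" for k a b
    using that mp_finite[of k a b] by (simp add: enn2real_positive_iff)
  define E where "E p = enn2real (mp (pa (fst p)) x (fst p)) * enn2real (mp (qb (snd p)) (snd p) y)" for p
  define \<delta> where "\<delta> = Min (E ` (S \<times> S))"
  define L where "L = Max ((\<lambda>p. pa (fst p) + qb (snd p)) ` (S \<times> S))"
  have E_fin: "finite (E ` (S \<times> S))" "E ` (S \<times> S) \<noteq> {}" using S by auto
  show ?thesis
  proof (rule that)
    show "\<delta> > 0" unfolding \<delta>_def using E_fin
      by (subst Min_gr_iff) (auto simp: E_def intro!: mult_pos_pos real_pos pa qb)
    fix a b k assume ab: "a \<in> S" "b \<in> S"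
    have "\<delta> \<le> E (a, b)" unfolding \<delta>_def using E_fin ab by (intro Min_le) auto
    then have "\<delta> * enn2real (mp k a b) \<le> E (a, b) * enn2real (mp k a b)"
      by (intro mult_right_mono) auto
    also have "\<dots> = enn2real (mp (pa a) x a * (mp k a b * mp (qb b) b y))"
      unfolding E_def by (simp add: enn2real_mult mult_ac)
    also have "\<dots> \<le> enn2real (mp (pa a + (k + qb b)) x y)"
    proof (intro enn2real_mono)
      have "mp (pa a) x a * (mp k a b * mp (qb b) b y) \<le> mp (pa a) x a * mp (k + qb b) a y"
        by (intro mult_left_mono mp_mult_le) simp
      also have "\<dots> \<le> mp (pa a + (k + qb b)) x y" by (rule mp_mult_le)
      finally show "mp (pa a) x a * (mp k a b * mp (qb b) b y) \<le> mp (pa a + (k + qb b)) x y" .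
    qed (rule mp_finite)
    moreover have "pa a + qb b \<le> L"
      unfolding L_def using S ab by (intro Max_ge) (auto intro!: image_eqI[where x="(a,b)"])
    ultimately show "\<exists>d\<le>L. \<delta> * enn2real (mp k a b) \<le> enn2real (mp (k + d) x y)"
      by (intro exI[of _ "pa a + qb b"]) (simp add: ac_simps)
  qed
qed

lemma mp_lower_often:
  assumes am: "\<not> nonamenable \<mu>" and r: "0 < r" "r < rho"
  obtains \<gamma> where "\<gamma> > 0" "\<And>K. \<exists>N\<ge>K. \<gamma> * r^N \<le> enn2real (mp N x y)"
proof -
  obtain S where S: "finite S" "S \<noteq> {}" and form_lower: "quad_form S m W \<ge> r * sq_norm S W"
    using folner_quad_form[OF am r(2)] by blast
  define c where "c = wmin / (real (card S) * wmax)"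
  have c: "c > 0" unfolding c_def using S W_bounds by (simp add: card_gt_0_iff)
  obtain \<delta> L where \<delta>: "\<delta> > 0"
    and connect: "\<And>a b k. a \<in> S \<Longrightarrow> b \<in> S \<Longrightarrow> \<exists>d\<le>L. \<delta> * enn2real (mp k a b) \<le> enn2real (mp (k + d) x y)"
    using connecting_paths[OF S] by blast
  define \<Lambda> where "\<Lambda> = max 1 (r^L)"
  have \<Lambda>: "\<Lambda> > 0" unfolding \<Lambda>_def by simp
  show ?thesis
  proof (rule that[of "\<delta> * c / \<Lambda>"])
    show "\<delta> * c / \<Lambda> > 0" using \<delta> c \<Lambda> by simp
    fix k
    obtain a b where ab: "a \<in> S" "b \<in> S" and entry: "c * r^k \<le> trunc_pow m S k a b"
      using trunc_pow_entry_lower[where a=m and W=W and S=S and k=k,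
          OF S m_sym m_nonneg r(1) W_bounds(1) W_bounds(2) W_bounds(3) form_lower]
      unfolding c_def by blast
    have "ennreal (trunc_pow m S k a b) \<le> mp k a b" by (rule trunc_pow_le_mp[OF S(1)])
    then have "enn2real (ennreal (trunc_pow m S k a b)) \<le> enn2real (mp k a b)"
      using mp_finite by (intro enn2real_mono) auto
    then have "trunc_pow m S k a b \<le> enn2real (mp k a b)"
      using trunc_pow_nonneg[of m, OF m_nonneg] by simp
    then have lower: "c * r^k \<le> enn2real (mp k a b)" using entry by linarith
    obtain d where d: "d \<le> L" and path: "\<delta> * enn2real (mp k a b) \<le> enn2real (mp (k + d) x y)"
      using connect[OF ab] by blast
    have r_d: "r^d \<le> \<Lambda>"
    proof (cases "r \<le> 1")
      case True then show ?thesis using r power_le_one[of r d] unfolding \<Lambda>_def by simp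
    next
      case False then show ?thesis using d power_increasing[of d L r] unfolding \<Lambda>_def by simp
    qed
    have "\<delta> * c / \<Lambda> * r^(k + d) = \<delta> * c * r^k * (r^d / \<Lambda>)"
      using \<Lambda> by (simp add: power_add field_simps)
    also have "\<dots> \<le> \<delta> * c * r^k * 1"
      using r_d \<Lambda> \<delta> c r by (intro mult_left_mono) auto
    also have "\<dots> = \<delta> * (c * r^k)" by simp
    also have "\<dots> \<le> \<delta> * enn2real (mp k a b)" using lower \<delta> by simp
    also have "\<dots> \<le> enn2real (mp (k + d) x y)" by (rule path)
    finally show "\<exists>N\<ge>k. \<delta> * c / \<Lambda> * r^N \<le> enn2real (mp N x y)"
      by (intro exI[of _ "k + d"] conjI) simp_all
  qed
qed

lemma M_s_ge_rho:
  assumes am: "\<not> nonamenable \<mu>"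
  shows "ereal rho \<le> M_s \<mu> x y"
proof (cases "rho = 0")
  case True
  have "ereal 0 \<le> M_s \<mu> x y" unfolding M_s_def
    by (intro le_Limsup always_eventually allI) (auto intro: real_root_ge_zero)
  then show ?thesis using True by simp
next
  case False
  then have "ereal 0 < ereal rho" using rho_nonneg by simp
  then show ?thesis
  proof (rule dense_le_bounded)
    fix t assume t: "ereal 0 < t" "t < ereal rho"
    then obtain r where tr: "t = ereal r" by (cases t) auto
    then have r: "0 < r" "r < rho" using t by auto
    obtain \<gamma> where "\<gamma> > 0" and "\<And>K. \<exists>N\<ge>K. \<gamma> * r^N \<le> enn2real (mp N x y)"
      using mp_lower_often[where x=x and y=y, OF am r] by blast
    then show "t \<le> M_s \<mu> x y"
      unfolding M_s_def tr using t tr by (intro limsup_root_ge) auto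
  qed
qed

lemma nonamenable_iff_M_s_less_M_w: "nonamenable \<mu> \<longleftrightarrow> M_s \<mu> x y < M_w \<mu> x"
  unfolding M_w_eq_rho using M_s_lt_rho[of x y] M_s_ge_rho[of x y] not_le by blast

end

theorem mainTheorem5:
  fixes \<mu> :: "'x::countable \<Rightarrow> ('x \<Rightarrow> nat) pmf"
    and g :: "'x \<Rightarrow> 'y::finite"
    and \<nu> :: "'y \<Rightarrow> ('y \<Rightarrow> nat) pmf"
    and x y :: 'x
  assumes "is_brw \<mu>"
    and "is_brw \<nu>"
    and "locally_isomorphic \<mu> g \<nu>"
    and "irreducible_brw \<mu>"
    and "non_oriented \<mu>"
  shows "nonamenable \<mu> \<longleftrightarrow> M_s \<mu> x y < M_w \<mu> x"
proof -
  interpret fbrw \<mu> g \<nu> using assms by unfold_locales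
  obtain \<rho> w where "\<rho> \<ge> 0" "\<And>i. w i > 0" "\<And>i. (\<Sum>j\<in>UNIV. n i j * w j) = \<rho> * w i"
    by (rule perron_frobenius_positive_eigenvector[of n, OF n_nonneg n_irreducible]) blast
  then interpret fbrw_pf \<mu> g \<nu> \<rho> w by unfold_locales
  show ?thesis by (rule nonamenable_iff_M_s_less_M_w)
qed

end
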